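(* Let $U_1$ be a vector space over a field of characteristic zero, let $U_{0-}=\bigoplus_{p\ge1}U_{-p+1}$ and let $U_+$ be the free Lie algebra generated by $U_1$. Then the vector space $U=U_{0-}\oplus U_+$ together with the bracket $[\![\cdot,\cdot]\!]$ described below is a Lie algebra.
   Context: Define $U_{-p+1}=\mathrm{Hom}(U_1,U_{-p+2})$ recursively for $p=1,2,\ldots$ (so $U_0=\mathrm{End}(U_1)$); elements of $U_{-p+1}$ are operators of order $p$. For an operator $A$ of order $p\ge1$ and $x\in U_1$ set $A\circ x=A(x)$, $x\circ A=0$, and for operators $A,B$ of orders $\ge1$ define $A\circ B$ recursively by $(A\circ B)(x)=A\circ B(x)+A(x)\circ B$, extended bilinearly to $U_{0-}$. $U_+=U_1\oplus U_2\oplus\cdots$ is the free Lie algebra on $U_1$ with its natural grading, and $U_{2+}=\bigoplus_{j\ge2}U_j$. The bracket on $U$ is: on $U_{0-}$, $[\![A,B]\!]=A\circ B-B\circ A$; on $U_+$, the free Lie algebra bracket; for $A\in U_{0-}$ and $x\in U_1$, $[\![A,x]\!]=A(x)$; for $A\in U_{0-}$ and $v,w\in U_+$, recursively $[\![A,[\![v,w]\!]]\!]=[\![[\![A,v]\!],w]\!]-[\![[\![A,w]\!],v]\!]$, extended linearly (this recursive definition is compatible with the Jacobi identity in $U_+$ and yields a well-defined bilinear map); and $[\![u,A]\!]=-[\![A,u]\!]$ for $u\in U_+$. *)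

theory Defs
  imports Main "HOL-Library.Function_Algebras" "HOL-Library.Product_Plus"
begin

text \<open>
  The vector space U_1 over the field 'k is represented through a
  basis B (a set of letters of type 'b): vectors of U_1 are finitely supported
  functions 'b => 'k vanishing outside B.

  Operators: an operator of order p (an element of Hom(U_1, U_{-p+2})) is determined
  by its values on basis vectors; iterating, it is the same as an arbitrary
  assignment of a vector of U_1 to every word of length p over B
  (A(b1)(b2)...(bp) is stored at the word [b1,...,bp]).  An element of
  U_{0-} (direct sum over p >= 1) is a function from words to U_1 that vanishes on
  the empty word, on words with letters outside B, and on all words of length
  outside a finite set.  More generally an element of type opr whose value at the
  empty word is nonzero is read as an element of U_1 (+) U_{0-}, the value at []
  being the U_1 part ("mixed" element).

  U_+ is the free Lie algebra on U_1, realised as the Lie subalgebra of the tensor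
  algebra (free associative algebra, functions on words) generated by U_1.
\<close>

type_synonym ('b,'k) vec = "'b \<Rightarrow> 'k"
type_synonym ('b,'k) opr = "'b list \<Rightarrow> 'b \<Rightarrow> 'k"
type_synonym ('b,'k) tens = "'b list \<Rightarrow> 'k"
type_synonym ('b,'k) elt = "('b,'k) opr \<times> ('b,'k) tens"

definition is_vec :: "'b set \<Rightarrow> ('b,'k::zero) vec \<Rightarrow> bool" where
  "is_vec B x \<longleftrightarrow> finite {b. x b \<noteq> 0} \<and> (\<forall>b. b \<notin> B \<longrightarrow> x b = 0)"

definition is_op :: "'b set \<Rightarrow> ('b,'k::zero) opr \<Rightarrow> bool" where
  "is_op B A \<longleftrightarrow> A [] = 0 \<and> (\<forall>w. is_vec B (A w))
     \<and> (\<forall>w. \<not> set w \<subseteq> B \<longrightarrow> A w = 0)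
     \<and> finite {length w | w. A w \<noteq> 0}"

text \<open>A(b): evaluation of an operator at the basis vector b (result is mixed).\<close>
definition ev_letter :: "('b,'k) opr \<Rightarrow> 'b \<Rightarrow> ('b,'k) opr" where
  "ev_letter A b = (\<lambda>w. A (b # w))"

definition apply_vec :: "('b,'k::comm_ring_1) opr \<Rightarrow> ('b,'k) vec \<Rightarrow> ('b,'k) opr" where
  "apply_vec A x = (\<lambda>w c. \<Sum>b\<in>{b. x b \<noteq> 0}. x b * A (b # w) c)"

definition strip :: "('b,'k::zero) opr \<Rightarrow> ('b,'k) opr" where
  "strip A = A([] := 0)"

text \<open>The product A o B, with the conventions A o x = A(x), x o A = 0 for x in U_1
  (the U_1 part of the left factor is ignored; the U_1 part of the right factor is
  applied).  Recursion: (A o B)(b) = A o B(b) + A(b) o B.\<close>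
fun comp :: "('b,'k::comm_ring_1) opr \<Rightarrow> ('b,'k) opr \<Rightarrow> 'b list \<Rightarrow> ('b,'k) vec" where
  "comp A B [] = apply_vec A (B []) []"
| "comp A B (b # w) = apply_vec A (B []) (b # w) + comp A (ev_letter B b) w
                        + comp (ev_letter A b) (strip B) w"

definition br_ops :: "('b,'k::comm_ring_1) opr \<Rightarrow> ('b,'k) opr \<Rightarrow> ('b,'k) opr" where
  "br_ops A B = (\<lambda>w. comp A B w - comp B A w)"

definition tmul :: "('b,'k::comm_ring_1) tens \<Rightarrow> ('b,'k) tens \<Rightarrow> ('b,'k) tens" where
  "tmul f g = (\<lambda>w. \<Sum>i\<in>{0..length w}. f (take i w) * g (drop i w))"

definition tbr :: "('b,'k::comm_ring_1) tens \<Rightarrow> ('b,'k) tens \<Rightarrow> ('b,'k) tens" where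
  "tbr f g = tmul f g - tmul g f"

definition vec_to_tens :: "('b,'k::zero) vec \<Rightarrow> ('b,'k) tens" where
  "vec_to_tens x = (\<lambda>w. case w of [b] \<Rightarrow> x b | _ \<Rightarrow> 0)"

inductive_set lie_poly :: "'b set \<Rightarrow> ('b,'k::comm_ring_1) tens set" for B where
  gen: "is_vec B x \<Longrightarrow> vec_to_tens x \<in> lie_poly B"
| add: "u \<in> lie_poly B \<Longrightarrow> v \<in> lie_poly B \<Longrightarrow> u + v \<in> lie_poly B"
| smult: "u \<in> lie_poly B \<Longrightarrow> (\<lambda>w. c * u w) \<in> lie_poly B"
| brk: "u \<in> lie_poly B \<Longrightarrow> v \<in> lie_poly B \<Longrightarrow> tbr u v \<in> lie_poly B"

definition Ucar :: "'b set \<Rightarrow> ('b,'k::comm_ring_1) elt set" where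
  "Ucar B = {(A, u). is_op B A \<and> u \<in> lie_poly B}"

definition scaleU :: "'k::comm_ring_1 \<Rightarrow> ('b,'k) elt \<Rightarrow> ('b,'k) elt" where
  "scaleU c z = ((\<lambda>w b. c * fst z w b), (\<lambda>w. c * snd z w))"

definition to_U :: "('b,'k::comm_ring_1) opr \<Rightarrow> ('b,'k) elt" where
  "to_U M = (strip M, vec_to_tens (M []))"

definition brU_with ::
  "(('b,'k::comm_ring_1) opr \<Rightarrow> ('b,'k) tens \<Rightarrow> ('b,'k) elt) \<Rightarrow> ('b,'k) elt \<Rightarrow> ('b,'k) elt \<Rightarrow> ('b,'k) elt" where
  "brU_with act z z' = (br_ops (fst z) (fst z'), 0) + act (fst z) (snd z') - act (fst z') (snd z)
                        + (0, tbr (snd z) (snd z'))"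

definition is_action :: "'b set \<Rightarrow> (('b,'k::comm_ring_1) opr \<Rightarrow> ('b,'k) tens \<Rightarrow> ('b,'k) elt) \<Rightarrow> bool" where
  "is_action B act \<longleftrightarrow>
     (\<forall>A u. is_op B A \<and> u \<in> lie_poly B \<longrightarrow> act A u \<in> Ucar B)
   \<and>      (\<forall>A A' u. is_op B A \<and> is_op B A' \<and> u \<in> lie_poly B \<longrightarrow> act (A + A') u = act A u + act A' u)
   \<and> (\<forall>A u u'. is_op B A \<and> u \<in> lie_poly B \<and> u' \<in> lie_poly B \<longrightarrow> act A (u + u') = act A u + act A u')
   \<and> (\<forall>c A u. is_op B A \<and> u \<in> lie_poly B \<longrightarrow> act (\<lambda>w b. c * A w b) u = scaleU c (act A u))
   \<and> (\<forall>c A u. is_op B A \<and> u \<in> lie_poly B \<longrightarrow> act A (\<lambda>w. c * u w) = scaleU c (act A u))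
   \<and> (\<forall>A x. is_op B A \<and> is_vec B x \<longrightarrow> act A (vec_to_tens x) = to_U (apply_vec A x))
   \<and> (\<forall>A v w. is_op B A \<and> v \<in> lie_poly B \<and> w \<in> lie_poly B \<longrightarrow>
        act A (tbr v w) = brU_with act (act A v) (0, w) - brU_with act (act A w) (0, v))"

definition actU :: "'b set \<Rightarrow> ('b,'k::comm_ring_1) opr \<Rightarrow> ('b,'k) tens \<Rightarrow> ('b,'k) elt" where
  "actU B = (SOME act. is_action B act)"

definition brU :: "'b set \<Rightarrow> ('b,'k::comm_ring_1) elt \<Rightarrow> ('b,'k) elt \<Rightarrow> ('b,'k) elt" where
  "brU B = brU_with (actU B)"

definition lie_algebra_on ::
  "'a::ab_group_add set \<Rightarrow> ('k::field \<Rightarrow> 'a \<Rightarrow> 'a) \<Rightarrow> ('a \<Rightarrow> 'a \<Rightarrow> 'a) \<Rightarrow> bool" where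
  "lie_algebra_on V sc br \<longleftrightarrow>
     0 \<in> V \<and> (\<forall>x\<in>V. \<forall>y\<in>V. x + y \<in> V) \<and> (\<forall>c. \<forall>x\<in>V. sc c x \<in> V)
   \<and> (\<forall>x\<in>V. \<forall>y\<in>V. br x y \<in> V)
   \<and> (\<forall>x\<in>V. \<forall>y\<in>V. \<forall>z\<in>V. br (x + y) z = br x z + br y z \<and> br z (x + y) = br z x + br z y)
   \<and> (\<forall>c. \<forall>x\<in>V. \<forall>y\<in>V. br (sc c x) y = sc c (br x y) \<and> br x (sc c y) = sc c (br x y))
   \<and> (\<forall>x\<in>V. br x x = 0)
   \<and> (\<forall>x\<in>V. \<forall>y\<in>V. \<forall>z\<in>V. br x (br y z) + br y (br z x) + br z (br x y) = 0)"

end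

theory Submission
  imports Defs
begin

text \<open>
  The bracket is determined by the action \<open>[[A, u]]\<close> of operators on \<open>U\<^sub>+\<close>, so the first task is to
  show that an action with the required properties exists. For a word \<open>g\<close> we take the operator part of
  \<open>[[A, g]]\<close> to be \<open>A\<close> evaluated on the letters of \<open>g\<close>, and its tensor part by a recursion over \<open>g\<close>;
  extended linearly, this satisfies a Leibniz rule on Lie polynomials, which is exactly the recursion
  \<open>[[A, [v, w]]] = [[[[A, v]], w]] - [[[[A, w]], v]]\<close>. Any such action makes the bracket bilinear and
  alternating. For the Jacobi identity split every element into its operator part and its Lie part.
  Three Lie parts satisfy it in the tensor algebra; one operator and two Lie parts is the defining
  recursion; two operators and a Lie part follow by induction over Lie polynomials from the rule
  \<open>[A, B](x) = [A, B(x)] - [B, A(x)]\<close> on generators. For three operators the Jacobiator is again an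
  operator; by the previous cases and induction on the orders it annihilates \<open>U\<^sub>1\<close>, hence vanishes.
\<close>

section \<open>Finitely supported functions\<close>

definition supp :: "('a \<Rightarrow> 'k::zero) \<Rightarrow> 'a set" where
  "supp f = {x. f x \<noteq> 0}"

abbreviation finite_supp :: "('a \<Rightarrow> 'k::zero) \<Rightarrow> bool" where
  "finite_supp f \<equiv> finite (supp f)"

text \<open>\<open>lin_ext u X\<close> evaluates the linear extension of \<open>X\<close> at \<open>u = \<Sum>\<^sub>g u g \<cdot> g\<close>. It is only
  meaningful for finitely supported \<open>u\<close>; otherwise the sum is \<open>0\<close>.\<close>

definition lin_ext :: "('a \<Rightarrow> 'k::comm_ring_1) \<Rightarrow> ('a \<Rightarrow> 'k) \<Rightarrow> 'k" where
  "lin_ext u X = (\<Sum>g\<in>supp u. u g * X g)"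

lemma supp_add: "supp (f + g) \<subseteq> supp f \<union> supp (g :: 'a \<Rightarrow> 'k::monoid_add)"
  by (auto simp: supp_def)

lemma finite_supp_add: "finite_supp f \<Longrightarrow> finite_supp g \<Longrightarrow> finite_supp (f + (g :: 'a \<Rightarrow> 'k::monoid_add))"
  by (rule finite_subset[OF supp_add]) simp

lemma finite_supp_scale: "finite_supp f \<Longrightarrow> finite_supp (\<lambda>x. (c :: 'k::mult_zero) * f x)"
  by (rule finite_subset[of _ "supp f"]) (auto simp: supp_def)

lemma finite_supp_uminus: "finite_supp f \<Longrightarrow> finite_supp (- (f :: 'a \<Rightarrow> 'k::ab_group_add))"
  by (simp add: supp_def)

lemma finite_supp_diff: "finite_supp f \<Longrightarrow> finite_supp g \<Longrightarrow> finite_supp (f - (g :: 'a \<Rightarrow> 'k::ab_group_add))"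
  by (rule finite_subset[of _ "supp f \<union> supp g"]) (auto simp: supp_def)

lemma finite_supp_zero [simp]: "finite_supp 0" "finite_supp (\<lambda>x. 0)"
  by (auto simp: supp_def)

lemma supp_lincomb:
  "supp (\<lambda>x. \<Sum>i\<in>I. c i * f i x) \<subseteq> (\<Union>i\<in>I. supp (f i :: 'a \<Rightarrow> 'k::comm_ring_1))"
proof
  fix x assume "x \<in> supp (\<lambda>x. \<Sum>i\<in>I. c i * f i x)"
  then obtain i where "i \<in> I" "c i * f i x \<noteq> 0" by (auto simp: supp_def intro: ccontr sum.neutral)
  then have "i \<in> I" "f i x \<noteq> 0" by auto
  then show "x \<in> (\<Union>i\<in>I. supp (f i))" by (auto simp: supp_def)
qed

lemma finite_supp_lincomb:
  assumes "finite I" "\<And>i. i \<in> I \<Longrightarrow> finite_supp (f i :: 'a \<Rightarrow> 'k::comm_ring_1)"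
  shows "finite_supp (\<lambda>x. \<Sum>i\<in>I. c i * f i x)"
  by (rule finite_subset[OF supp_lincomb]) (use assms in auto)

lemma lin_ext_superset:
  assumes "finite S" "supp u \<subseteq> S"
  shows "lin_ext u X = (\<Sum>g\<in>S. u g * X g)"
  unfolding lin_ext_def by (rule sum.mono_neutral_left) (use assms in \<open>auto simp: supp_def\<close>)

lemma lin_ext_add_left:
  assumes "finite_supp u" "finite_supp v"
  shows "lin_ext (u + v) X = lin_ext u X + lin_ext v X"
proof -
  let ?S = "supp u \<union> supp v"
  have S: "finite ?S" using assms by auto
  have "lin_ext (u + v) X = (\<Sum>g\<in>?S. (u + v) g * X g)"
    by (rule lin_ext_superset[OF S supp_add])
  also have "\<dots> = (\<Sum>g\<in>?S. u g * X g) + (\<Sum>g\<in>?S. v g * X g)"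
    by (simp add: distrib_right sum.distrib)
  also have "\<dots> = lin_ext u X + lin_ext v X"
    by (simp add: lin_ext_superset[OF S])
  finally show ?thesis .
qed

lemma lin_ext_scale_left:
  assumes "finite_supp u" shows "lin_ext (\<lambda>x. c * u x) X = c * lin_ext u X"
proof -
  have "supp (\<lambda>x. c * u x) \<subseteq> supp u" by (auto simp: supp_def)
  then have "lin_ext (\<lambda>x. c * u x) X = (\<Sum>g\<in>supp u. c * u g * X g)"
    by (rule lin_ext_superset[OF assms])
  then show ?thesis by (simp add: lin_ext_def sum_distrib_left mult.assoc)
qed

lemma lin_ext_diff_left:
  assumes "finite_supp u" "finite_supp v"
  shows "lin_ext (u - v) X = lin_ext u X - lin_ext v X"
proof -
  have "lin_ext (- v) X = - lin_ext v X"
    by (simp add: lin_ext_def supp_def sum_negf)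
  then show ?thesis
    using lin_ext_add_left[OF assms(1) finite_supp_uminus[OF assms(2)], of X] by simp
qed

lemma lin_ext_add_right: "lin_ext u (\<lambda>g. X g + Y g) = lin_ext u X + lin_ext u Y"
  by (simp add: lin_ext_def distrib_left sum.distrib)

lemma lin_ext_scale_right: "lin_ext u (\<lambda>g. c * X g) = c * lin_ext u X"
  by (simp add: lin_ext_def sum_distrib_left mult.left_commute)

lemma lin_ext_zero_right [simp]: "lin_ext u (\<lambda>g. 0) = 0"
  by (simp add: lin_ext_def)

lemma lin_ext_sum_right: "lin_ext u (\<lambda>g. \<Sum>i\<in>I. X i g) = (\<Sum>i\<in>I. lin_ext u (X i))"
  unfolding lin_ext_def sum_distrib_left by (rule sum.swap)

lemma lin_ext_swap:
  "lin_ext u (\<lambda>a. lin_ext v (\<lambda>b. X a b)) = lin_ext v (\<lambda>b. lin_ext u (\<lambda>a. X a b))"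
  unfolding lin_ext_def sum_distrib_left by (subst sum.swap) (simp add: algebra_simps)

lemma lin_ext_indicator:
  assumes "finite_supp u" shows "lin_ext u (\<lambda>g. if g = w then 1 else 0) = u w"
proof -
  have "lin_ext u (\<lambda>g. if g = w then 1 else 0) = (\<Sum>g\<in>supp u. if g = w then u g else 0)"
    unfolding lin_ext_def by (rule sum.cong) auto
  also have "\<dots> = u w" using assms by (subst sum.delta) (auto simp: supp_def)
  finally show ?thesis .
qed


section \<open>The tensor algebra\<close>

lemma tmul_Nil [simp]: "tmul f g [] = f [] * g []"
  by (simp add: tmul_def)

lemma tmul_Cons: "tmul f g (c # w) = f [] * g (c # w) + tmul (\<lambda>x. f (c # x)) g w"
proof -
  have "tmul f g (c # w) = (\<Sum>i\<in>{0..Suc (length w)}. f (take i (c # w)) * g (drop i (c # w)))"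
    by (simp add: tmul_def)
  also have "\<dots> = f [] * g (c # w) + (\<Sum>i\<in>{0..length w}. f (c # take i w) * g (drop i w))"
    by (subst sum.atLeast0_atMost_Suc_shift) simp
  finally show ?thesis by (simp add: tmul_def)
qed

lemma tmul_add_left: "tmul (f + g) h = tmul f h + tmul g h"
  by (rule ext) (simp add: tmul_def distrib_right sum.distrib)

lemma tmul_add_right: "tmul h (f + g) = tmul h f + tmul h g"
  by (rule ext) (simp add: tmul_def distrib_left sum.distrib)

lemma tmul_scale_left: "tmul (\<lambda>x. c * f x) h = (\<lambda>w. c * tmul f h w)"
  by (rule ext) (simp add: tmul_def sum_distrib_left mult.assoc)

lemma tmul_scale_right: "tmul h (\<lambda>x. c * f x) = (\<lambda>w. c * tmul h f w)"
  by (rule ext) (simp add: tmul_def sum_distrib_left algebra_simps)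

lemma tmul_zero [simp]: "tmul 0 h = 0" "tmul h 0 = 0" "tmul (\<lambda>x. 0) h = 0" "tmul h (\<lambda>x. 0) = 0"
  by (auto simp: tmul_def fun_eq_iff)

lemma tmul_diff_left: "tmul (f - g) h = tmul f h - tmul g h"
  by (rule ext) (simp add: tmul_def left_diff_distrib sum_subtractf)

lemma tmul_diff_right: "tmul h (f - g) = tmul h f - tmul h g"
  by (rule ext) (simp add: tmul_def right_diff_distrib sum_subtractf)

lemma tmul_assoc: "tmul (tmul f g) h = tmul f (tmul g h)"
proof (rule ext)
  fix w show "tmul (tmul f g) h w = tmul f (tmul g h) w"
  proof (induction w arbitrary: f)
    case Nil then show ?case by simp
  next
    case (Cons c w)
    have "(\<lambda>x. tmul f g (c # x)) = (\<lambda>x. f [] * g (c # x)) + tmul (\<lambda>x. f (c # x)) g"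
      by (rule ext) (simp add: tmul_Cons)
    then show ?case
      by (simp add: tmul_Cons tmul_add_left tmul_scale_left Cons.IH algebra_simps)
  qed
qed

lemma tbr_jacobi: "tbr f (tbr g h) + tbr g (tbr h f) + tbr h (tbr f g) = 0"
  by (simp add: tbr_def tmul_diff_left tmul_diff_right tmul_assoc)

lemma tbr_add_left: "tbr (u + v) w = tbr u w + tbr v w"
  by (simp add: tbr_def tmul_add_left tmul_add_right algebra_simps)

lemma tbr_add_right: "tbr w (u + v) = tbr w u + tbr w v"
  by (simp add: tbr_def tmul_add_left tmul_add_right algebra_simps)

lemma tbr_scale_left: "tbr (\<lambda>x. c * u x) w = (\<lambda>x. c * tbr u w x)"
  by (simp add: tbr_def tmul_scale_left tmul_scale_right fun_eq_iff algebra_simps)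

lemma tbr_scale_right: "tbr w (\<lambda>x. c * u x) = (\<lambda>x. c * tbr w u x)"
  by (simp add: tbr_def tmul_scale_left tmul_scale_right fun_eq_iff algebra_simps)

lemma tbr_self: "tbr u u = 0"
  by (simp add: tbr_def)

lemma tbr_zero: "tbr 0 u = 0" "tbr u 0 = 0"
  by (simp_all add: tbr_def)

lemma splits_eq_image: "{p. fst p @ snd p = e} = (\<lambda>i. (take i e, drop i e)) ` {0..length e}"
proof (intro set_eqI iffI)
  fix p :: "'a list \<times> 'a list" assume "p \<in> {p. fst p @ snd p = e}"
  then have "fst p @ snd p = e" by simp
  then show "p \<in> (\<lambda>i. (take i e, drop i e)) ` {0..length e}"
    by (intro image_eqI[where x = "length (fst p)"]) (cases p; auto)+
qed auto

lemma tmul_eq_sum_splits: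
  "tmul f g e = (\<Sum>p\<in>{p\<in>supp f \<times> supp g. fst p @ snd p = e}. f (fst p) * g (snd p))"
proof -
  have "inj_on (\<lambda>i. (take i e, drop i e)) {0..length e}"
    by (rule inj_onI) (metis atLeastAtMost_iff length_take min.absorb2 prod.inject)
  then have "tmul f g e = (\<Sum>p\<in>{p. fst p @ snd p = e}. f (fst p) * g (snd p))"
    unfolding tmul_def splits_eq_image by (subst sum.reindex) simp_all
  also have "\<dots> = (\<Sum>p\<in>{p\<in>supp f \<times> supp g. fst p @ snd p = e}. f (fst p) * g (snd p))"
    by (rule sum.mono_neutral_right) (auto simp: supp_def, simp add: splits_eq_image)
  finally show ?thesis .
qed

lemma supp_tmul: "supp (tmul f g) \<subseteq> (\<lambda>p. fst p @ snd p) ` (supp f \<times> supp g)"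
proof
  fix e assume "e \<in> supp (tmul f g)"
  then obtain i where "f (take i e) * g (drop i e) \<noteq> 0"
    by (auto simp: supp_def tmul_def intro: ccontr sum.neutral)
  then show "e \<in> (\<lambda>p. fst p @ snd p) ` (supp f \<times> supp g)"
    by (intro image_eqI[of _ _ "(take i e, drop i e)"]) (auto simp: supp_def)
qed

lemma finite_supp_tmul: "finite_supp f \<Longrightarrow> finite_supp g \<Longrightarrow> finite_supp (tmul f g)"
  by (rule finite_subset[OF supp_tmul]) simp

lemma finite_supp_tbr: "finite_supp f \<Longrightarrow> finite_supp g \<Longrightarrow> finite_supp (tbr f g)"
  unfolding tbr_def by (intro finite_supp_diff finite_supp_tmul)

lemma lin_ext_tmul:
  assumes f: "finite_supp f" and g: "finite_supp g"
  shows "lin_ext (tmul f g) X = lin_ext f (\<lambda>a. lin_ext g (\<lambda>b. X (a @ b)))"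
proof -
  let ?F = "supp f \<times> supp g"
  let ?S = "(\<lambda>p. fst p @ snd p) ` ?F"
  have fF: "finite ?F" using f g by simp
  have "lin_ext (tmul f g) X = (\<Sum>e\<in>?S. tmul f g e * X e)"
    by (rule lin_ext_superset) (use fF supp_tmul in auto)
  also have "\<dots> = (\<Sum>e\<in>?S. \<Sum>p\<in>{p\<in>?F. fst p @ snd p = e}. f (fst p) * g (snd p) * X (fst p @ snd p))"
    by (rule sum.cong[OF refl]) (simp add: tmul_eq_sum_splits[of f g] sum_distrib_right)
  also have "\<dots> = (\<Sum>p\<in>?F. f (fst p) * g (snd p) * X (fst p @ snd p))"
    by (rule sum.group) (use fF in auto)
  also have "\<dots> = (\<Sum>a\<in>supp f. \<Sum>b\<in>supp g. f a * g b * X (a @ b))"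
    by (subst sum.cartesian_product) (simp add: case_prod_beta)
  also have "\<dots> = lin_ext f (\<lambda>a. lin_ext g (\<lambda>b. X (a @ b)))"
    by (simp add: lin_ext_def sum_distrib_left mult.assoc)
  finally show ?thesis .
qed

lemma vec_to_tens_Nil [simp]: "vec_to_tens x [] = 0"
  by (simp add: vec_to_tens_def)

lemma vec_to_tens_Cons [simp]: "vec_to_tens x (c # w) = (if w = [] then x c else 0)"
  by (simp add: vec_to_tens_def split: list.split)

lemma supp_vec_to_tens: "supp (vec_to_tens x) = (\<lambda>b. [b]) ` supp x"
proof (rule set_eqI)
  fix w show "w \<in> supp (vec_to_tens x) \<longleftrightarrow> w \<in> (\<lambda>b. [b]) ` supp x"
    by (cases w) (auto simp: supp_def)
qed

lemma finite_supp_vec_to_tens: "finite_supp x \<Longrightarrow> finite_supp (vec_to_tens x)"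
  by (simp add: supp_vec_to_tens)

lemma is_vec_finite_supp: "is_vec B x \<Longrightarrow> finite_supp x"
  by (simp add: is_vec_def supp_def)

lemma vec_to_tens_zero [simp]: "vec_to_tens 0 = 0" "vec_to_tens (\<lambda>b. 0) = 0"
  by (auto simp: vec_to_tens_def fun_eq_iff split: list.splits)

lemma vec_to_tens_diff: "vec_to_tens (x - y) = vec_to_tens x - vec_to_tens (y :: 'b \<Rightarrow> 'k::ab_group_add)"
  by (simp add: vec_to_tens_def fun_eq_iff split: list.split)

lemma lin_ext_vec_to_tens:
  assumes "finite_supp x"
  shows "lin_ext (vec_to_tens x) X = (\<Sum>b\<in>supp x. x b * X [b])"
  unfolding lin_ext_def supp_vec_to_tens
  by (subst sum.reindex) (auto simp: inj_on_def vec_to_tens_def)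

lemma tmul_vec_to_tens_Cons [simp]: "tmul (vec_to_tens y) g (c # w) = y c * g w"
  by (cases w) (simp_all add: tmul_Cons)

lemma lin_ext_tmul_vec_to_tens:
  assumes "finite_supp y" "finite_supp g"
  shows "lin_ext (tmul (vec_to_tens y) g) X = (\<Sum>b\<in>supp y. y b * lin_ext g (\<lambda>d. X (b # d)))"
  by (simp add: lin_ext_tmul lin_ext_vec_to_tens finite_supp_vec_to_tens assms)

lemma lin_ext_tmul_vec_to_tens_right:
  "lin_ext u (\<lambda>d. tmul (vec_to_tens y) (T d) e) = tmul (vec_to_tens y) (\<lambda>e'. lin_ext u (\<lambda>d. T d e')) e"
  by (cases e) (simp_all add: lin_ext_scale_right)

lemma tmul_vec_to_tens_eq_sum:
  assumes "finite_supp x"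
  shows "tmul (vec_to_tens x) T e = (\<Sum>b\<in>supp x. x b * tmul (vec_to_tens (\<lambda>c. if c = b then 1 else 0)) T e)"
proof (cases e)
  case (Cons c e')
  have "(\<Sum>b\<in>supp x. x b * tmul (vec_to_tens (\<lambda>c. if c = b then 1 else 0)) T e)
      = (\<Sum>b\<in>supp x. if b = c then x b * T e' else 0)"
    using Cons by (intro sum.cong) auto
  also have "\<dots> = x c * T e'" using assms by (subst sum.delta) (auto simp: supp_def)
  finally show ?thesis using Cons by simp
qed simp

lemma finite_supp_lie_poly: "u \<in> lie_poly B \<Longrightarrow> finite_supp u"
proof (induction rule: lie_poly.induct)
  case (gen x) then show ?case by (intro finite_supp_vec_to_tens is_vec_finite_supp)
next
  case (add u v) then show ?case by (intro finite_supp_add)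
next
  case (smult u c) then show ?case by (intro finite_supp_scale)
next
  case (brk u v) then show ?case by (intro finite_supp_tbr)
qed

lemma is_vec_zero [simp]: "is_vec B 0" "is_vec B (\<lambda>b. 0)"
  by (auto simp: is_vec_def)

lemma lie_poly_zero: "0 \<in> lie_poly B"
  using lie_poly.gen[OF is_vec_zero(1)] by simp

lemma lie_poly_uminus: "u \<in> lie_poly B \<Longrightarrow> - u \<in> lie_poly B"
proof -
  assume "u \<in> lie_poly B"
  moreover have "(\<lambda>w. (-1) * u w) = - u" by (rule ext) simp
  ultimately show ?thesis using lie_poly.smult[of u B "-1"] by simp
qed

lemma lie_poly_diff: "u \<in> lie_poly B \<Longrightarrow> v \<in> lie_poly B \<Longrightarrow> u - v \<in> lie_poly B"
  using lie_poly.add[OF _ lie_poly_uminus, of u B v] by simp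


section \<open>Operators\<close>

definition order_le :: "('b,'k::zero) opr \<Rightarrow> nat \<Rightarrow> bool" where
  "order_le A n \<longleftrightarrow> (\<forall>w. A w \<noteq> 0 \<longrightarrow> length w \<le> n)"

definition finite_supp_vals :: "('b,'k::zero) opr \<Rightarrow> bool" where
  "finite_supp_vals A \<longleftrightarrow> (\<forall>w. finite_supp (A w))"

lemma is_vec_add:
  assumes "is_vec B x" "is_vec B y" shows "is_vec B (\<lambda>c. x c + (y c :: 'k::comm_ring_1))"
proof -
  have "{c. x c + y c \<noteq> 0} \<subseteq> {c. x c \<noteq> 0} \<union> {c. y c \<noteq> 0}" by auto
  then show ?thesis using assms by (auto simp: is_vec_def intro: finite_subset)
qed

lemma is_vec_diff:
  assumes "is_vec B x" "is_vec B y" shows "is_vec B (\<lambda>c. x c - (y c :: 'k::comm_ring_1))"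
proof -
  have "{c. x c - y c \<noteq> 0} \<subseteq> {c. x c \<noteq> 0} \<union> {c. y c \<noteq> 0}" by auto
  then show ?thesis using assms by (auto simp: is_vec_def intro: finite_subset)
qed

lemma is_vec_scale:
  assumes "is_vec B x" shows "is_vec B (\<lambda>c. k * (x c :: 'k::comm_ring_1))"
proof -
  have "{c. k * x c \<noteq> 0} \<subseteq> {c. x c \<noteq> 0}" by auto
  then show ?thesis using assms by (auto simp: is_vec_def intro: finite_subset)
qed

lemma is_vec_lincomb:
  assumes "finite I" "\<And>i. i \<in> I \<Longrightarrow> is_vec B (y i)"
  shows "is_vec B (\<lambda>c. \<Sum>i\<in>I. f i * (y i c :: 'k::comm_ring_1))"
proof -
  have "finite_supp (\<lambda>c. \<Sum>i\<in>I. f i * y i c)"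
    by (rule finite_supp_lincomb) (use assms is_vec_finite_supp in auto)
  moreover have "(\<Sum>i\<in>I. f i * y i c) = 0" if "c \<notin> B" for c
    using assms(2) that by (intro sum.neutral) (auto simp: is_vec_def)
  ultimately show ?thesis by (simp add: is_vec_def supp_def)
qed

lemma is_vec_apply_vec:
  assumes "\<And>w. is_vec B (A w)" "is_vec B y"
  shows "is_vec B (apply_vec A y w)"
proof -
  have "is_vec B (\<lambda>c. \<Sum>b\<in>supp y. y b * A (b # w) c)"
    by (rule is_vec_lincomb) (use assms is_vec_finite_supp in auto)
  then show ?thesis by (simp add: apply_vec_def supp_def)
qed

lemma order_le_finite_lengths: "order_le A n \<Longrightarrow> finite {length w | w. A w \<noteq> 0}"
  by (rule finite_subset[of _ "{0..n}"]) (auto simp: order_le_def)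

lemma is_opI:
  assumes "A [] = 0" "\<And>w. is_vec B (A w)" "\<And>w. \<not> set w \<subseteq> B \<Longrightarrow> A w = 0" "order_le A n"
  shows "is_op B A"
  using assms order_le_finite_lengths by (auto simp: is_op_def)

lemma is_op_Nil: "is_op B A \<Longrightarrow> A [] = 0"
  by (simp add: is_op_def)

lemma is_op_is_vec: "is_op B A \<Longrightarrow> is_vec B (A w)"
  by (simp add: is_op_def)

lemma is_op_outside: "is_op B A \<Longrightarrow> \<not> set w \<subseteq> B \<Longrightarrow> A w = 0"
  by (simp add: is_op_def)

lemma is_op_order_le:
  assumes "is_op B A" shows "\<exists>n. order_le A n"
proof -
  have "finite {length w | w. A w \<noteq> 0}" using assms by (simp add: is_op_def)
  then obtain n where "\<forall>l \<in> {length w | w. A w \<noteq> 0}. l \<le> n"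
    using finite_nat_set_iff_bounded_le by blast
  then have "order_le A n" by (auto simp: order_le_def)
  then show ?thesis by blast
qed

lemma is_op_finite_supp_vals: "is_op B A \<Longrightarrow> finite_supp_vals A"
  unfolding finite_supp_vals_def is_op_def using is_vec_finite_supp by blast

lemma is_op_zero: "is_op B 0"
  by (simp add: is_op_def is_vec_def)

lemma is_op_lincomb:
  fixes A A' :: "('b,'k::comm_ring_1) opr"
  assumes A: "is_op B A" and A': "is_op B A'"
  shows "is_op B (\<lambda>w c. k * A w c + k' * A' w c)"
proof -
  obtain n n' where n: "order_le A n" and n': "order_le A' n'" using A A' is_op_order_le by blast
  show ?thesis
  proof (rule is_opI)
    show "order_le (\<lambda>w c. k * A w c + k' * A' w c) (n + n')"
      unfolding order_le_def
    proof (intro allI impI)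
      fix w assume "(\<lambda>c. k * A w c + k' * A' w c) \<noteq> 0"
      then have "A w \<noteq> 0 \<or> A' w \<noteq> 0" by (rule contrapos_np) (simp add: fun_eq_iff)
      then show "length w \<le> n + n'" using n n' by (auto simp: order_le_def)
    qed
    show "is_vec B (\<lambda>c. k * A w c + k' * A' w c)" for w
      by (intro is_vec_add is_vec_scale is_op_is_vec A A')
  qed (use A A' in \<open>simp_all add: is_op_Nil is_op_outside zero_fun_def\<close>)
qed

lemma is_op_add:
  assumes "is_op B A" "is_op B A'" shows "is_op B (A + A' :: ('b,'k::comm_ring_1) opr)"
proof -
  have "A + A' = (\<lambda>w c. 1 * A w c + 1 * A' w c)" by (simp add: fun_eq_iff)
  then show ?thesis using is_op_lincomb[OF assms] by metis
qed

lemma is_op_scale: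
  assumes "is_op B A" shows "is_op B (\<lambda>w c. k * (A :: ('b,'k::comm_ring_1) opr) w c)"
  using is_op_lincomb[OF assms assms, of k 0] by simp

lemma is_op_uminus:
  assumes "is_op B A" shows "is_op B (- A :: ('b,'k::comm_ring_1) opr)"
proof -
  have "- A = (\<lambda>w c. (-1) * A w c)" by (simp add: fun_eq_iff)
  then show ?thesis using is_op_scale[OF assms] by metis
qed

lemma apply_vec_eq_sum: "apply_vec A x = (\<lambda>v c. \<Sum>b\<in>supp x. x b * ev_letter A b v c)"
  by (simp add: apply_vec_def ev_letter_def supp_def)

lemma apply_vec_superset:
  assumes "finite S" "supp y \<subseteq> S"
  shows "apply_vec A y w c = (\<Sum>b\<in>S. y b * A (b # w) c)"
  unfolding apply_vec_def
  by (rule sum.mono_neutral_left) (use assms in \<open>auto simp: supp_def\<close>)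

lemma apply_vec_sum_right:
  assumes "finite I" "\<And>i. i \<in> I \<Longrightarrow> finite_supp (y i)"
  shows "apply_vec A (\<lambda>c. \<Sum>i\<in>I. f i * y i c) w c = (\<Sum>i\<in>I. f i * apply_vec A (y i) w c)"
proof -
  let ?S = "\<Union>i\<in>I. supp (y i)"
  have S: "finite ?S" using assms by auto
  have "apply_vec A (\<lambda>c. \<Sum>i\<in>I. f i * y i c) w c = (\<Sum>b\<in>?S. (\<Sum>i\<in>I. f i * y i b) * A (b # w) c)"
    by (rule apply_vec_superset[OF S supp_lincomb])
  also have "\<dots> = (\<Sum>b\<in>?S. \<Sum>i\<in>I. f i * (y i b * A (b # w) c))"
    by (simp add: sum_distrib_right mult.assoc)
  also have "\<dots> = (\<Sum>i\<in>I. \<Sum>b\<in>?S. f i * (y i b * A (b # w) c))"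
    by (rule sum.swap)
  also have "\<dots> = (\<Sum>i\<in>I. f i * apply_vec A (y i) w c)"
  proof (rule sum.cong[OF refl])
    fix i assume "i \<in> I"
    then have "supp (y i) \<subseteq> ?S" by blast
    then show "(\<Sum>b\<in>?S. f i * (y i b * A (b # w) c)) = f i * apply_vec A (y i) w c"
      by (simp add: apply_vec_superset[OF S] sum_distrib_left)
  qed
  finally show ?thesis .
qed

lemma apply_vec_sum_left:
  "apply_vec (\<lambda>w c. \<Sum>i\<in>I. f i * A i w c) y w c = (\<Sum>i\<in>I. f i * apply_vec (A i) y w c)"
proof -
  have "apply_vec (\<lambda>w c. \<Sum>i\<in>I. f i * A i w c) y w c
        = (\<Sum>b\<in>{b. y b \<noteq> 0}. \<Sum>i\<in>I. f i * (y b * A i (b # w) c))"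
    by (simp add: apply_vec_def sum_distrib_left mult.left_commute)
  also have "\<dots> = (\<Sum>i\<in>I. f i * apply_vec (A i) y w c)"
    by (subst sum.swap) (simp add: apply_vec_def sum_distrib_left)
  finally show ?thesis .
qed

lemma apply_vec_strip: "w \<noteq> [] \<Longrightarrow> apply_vec (strip A) y w = apply_vec A y w"
  by (simp add: apply_vec_def strip_def)

lemma apply_vec_nonzero: "apply_vec A y w \<noteq> 0 \<Longrightarrow> \<exists>b. A (b # w) \<noteq> 0"
  by (rule ccontr) (simp add: apply_vec_def fun_eq_iff)

lemma order_le_strip_apply_vec:
  assumes "order_le A n" shows "order_le (strip (apply_vec A y)) (n - 1)"
  unfolding order_le_def
proof (intro allI impI)
  fix w assume "strip (apply_vec A y) w \<noteq> 0"
  then have "apply_vec A y w \<noteq> 0" by (auto simp: strip_def split: if_splits)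
  then obtain b where "A (b # w) \<noteq> 0" using apply_vec_nonzero by blast
  then show "length w \<le> n - 1" using assms by (fastforce simp: order_le_def)
qed

lemma finite_supp_vals_ev_letter: "finite_supp_vals A \<Longrightarrow> finite_supp_vals (ev_letter A b)"
  by (simp add: finite_supp_vals_def ev_letter_def)

lemma finite_supp_vals_strip: "finite_supp_vals A \<Longrightarrow> finite_supp_vals (strip A)"
  by (simp add: finite_supp_vals_def strip_def)

lemma order_le_ev_letter: "order_le A n \<Longrightarrow> order_le (ev_letter A b) (n - 1)"
  unfolding order_le_def ev_letter_def by (fastforce dest: spec[of _ "b # _"])

lemma ev_letter_strip: "ev_letter (strip A) b = ev_letter A b"
  by (simp add: strip_def ev_letter_def fun_eq_iff)

lemma strip_strip: "strip (strip A) = strip A"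
  by (simp add: strip_def)

lemma ev_letter_zero [simp]: "ev_letter 0 b = 0"
  by (simp add: ev_letter_def fun_eq_iff)

lemma strip_zero [simp]: "strip 0 = 0"
  by (simp add: strip_def fun_eq_iff)

lemma apply_vec_zero [simp]: "apply_vec A 0 = 0" "apply_vec A (\<lambda>b. 0) = 0" "apply_vec 0 y = 0"
  by (simp_all add: apply_vec_def fun_eq_iff)

lemma comp_zero_left: "comp 0 B w = 0"
  by (induction w arbitrary: B) simp_all

lemma comp_zero_right: "comp A 0 w = 0"
  by (induction w arbitrary: A) simp_all

lemma comp_sum_left:
  "comp (\<lambda>w c. \<Sum>i\<in>I. f i * A i w c) B w c = (\<Sum>i\<in>I. f i * comp (A i) B w c)"
proof (induction w arbitrary: A B c)
  case Nil then show ?case by (simp add: apply_vec_sum_left)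
next
  case (Cons b w)
  have "ev_letter (\<lambda>w c. \<Sum>i\<in>I. f i * A i w c) b = (\<lambda>w c. \<Sum>i\<in>I. f i * ev_letter (A i) b w c)"
    by (simp add: ev_letter_def)
  then show ?case by (simp add: apply_vec_sum_left Cons.IH distrib_left sum.distrib)
qed

lemma comp_sum_right:
  assumes "finite I" "\<And>i. i \<in> I \<Longrightarrow> finite_supp_vals (B i)"
  shows "comp A (\<lambda>w c. \<Sum>i\<in>I. f i * B i w c) w c = (\<Sum>i\<in>I. f i * comp A (B i) w c)"
  using assms(2)
proof (induction w arbitrary: A B c)
  case Nil
  then show ?case by (simp add: apply_vec_sum_right[OF assms(1)] finite_supp_vals_def)
next
  case (Cons b w)
  have "ev_letter (\<lambda>w c. \<Sum>i\<in>I. f i * B i w c) b = (\<lambda>w c. \<Sum>i\<in>I. f i * ev_letter (B i) b w c)"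
    by (simp add: ev_letter_def)
  moreover have "strip (\<lambda>w c. \<Sum>i\<in>I. f i * B i w c) = (\<lambda>w c. \<Sum>i\<in>I. f i * strip (B i) w c)"
    by (simp add: strip_def fun_eq_iff)
  moreover note Cons.IH[OF finite_supp_vals_ev_letter[OF Cons.prems]]
    Cons.IH[OF finite_supp_vals_strip[OF Cons.prems]]
  ultimately show ?case
    using Cons.prems
    by (simp add: apply_vec_sum_right[OF assms(1)] finite_supp_vals_def sum.distrib distrib_left)
qed

lemma comp_lincomb_left:
  "comp (\<lambda>w c. k * A w c + k' * A' w c) B w c = k * comp A B w c + k' * comp A' B w c"
  using comp_sum_left[of "\<lambda>i. if i then k else k'" "\<lambda>i. if i then A else A'" "{True, False}"]
  by simp

lemma comp_lincomb_right:
  assumes "finite_supp_vals B" "finite_supp_vals B'"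
  shows "comp A (\<lambda>w c. k * B w c + k' * B' w c) w c = k * comp A B w c + k' * comp A B' w c"
  using comp_sum_right[of "{True, False}" "\<lambda>i. if i then B else B'" A "\<lambda>i. if i then k else k'"]
    assms by simp

lemma comp_strip_left: "comp (strip A) B w = comp A B w"
proof (induction w arbitrary: A B)
  case Nil then show ?case by (simp add: apply_vec_def strip_def)
next
  case (Cons b w) then show ?case by (simp add: apply_vec_strip ev_letter_strip)
qed

lemma comp_strip_right: "comp A B w = comp A (strip B) w + apply_vec A (B []) w"
proof (cases w)
  case Nil
  then show ?thesis by (simp add: strip_def apply_vec_def fun_eq_iff)
next
  case (Cons b w')
  have "apply_vec A (strip B []) (b # w') = 0" by (simp add: strip_def apply_vec_def fun_eq_iff)
  then show ?thesis using Cons by (simp add: ev_letter_strip strip_strip)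
qed

lemma comp_Nil_op: "B [] = 0 \<Longrightarrow> comp A B [] = 0"
  by (simp add: apply_vec_def fun_eq_iff)

lemma comp_Cons_op:
  assumes "B [] = 0"
  shows "comp A B (b # w) = comp A (ev_letter B b) w + comp (ev_letter A b) B w"
proof -
  have "strip B = B" using assms by (simp add: strip_def fun_eq_iff)
  moreover have "apply_vec A (B []) = 0" using assms by simp
  ultimately show ?thesis by simp
qed

lemma is_vec_comp:
  assumes "\<And>w. is_vec B (X w)" "\<And>w. is_vec B (Y w)"
  shows "is_vec B (comp X Y w)"
  using assms
proof (induction w arbitrary: X Y)
  case Nil then show ?case by (simp add: is_vec_apply_vec)
next
  case (Cons b w)
  have 1: "is_vec B (apply_vec X (Y []) (b # w))" by (rule is_vec_apply_vec) (use Cons.prems in auto)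
  have 2: "is_vec B (comp X (ev_letter Y b) w)"
    by (rule Cons.IH) (use Cons.prems in \<open>auto simp: ev_letter_def\<close>)
  have 3: "is_vec B (comp (ev_letter X b) (strip Y) w)"
    by (rule Cons.IH) (use Cons.prems in \<open>auto simp: ev_letter_def strip_def\<close>)
  show ?case using is_vec_add[OF is_vec_add[OF 1 2] 3] by (simp add: plus_fun_def)
qed

lemma comp_outside:
  assumes "\<And>w. \<not> set w \<subseteq> B \<Longrightarrow> X w = 0" "\<And>w. \<not> set w \<subseteq> B \<Longrightarrow> Y w = 0"
    and "\<not> set w \<subseteq> B"
  shows "comp X Y w = 0"
  using assms
proof (induction w arbitrary: X Y)
  case Nil then show ?case by simp
next
  case (Cons b w)
  have av: "apply_vec X (Y []) (b # w) = 0"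
    using Cons.prems(1)[of "_ # b # w"] Cons.prems(3) by (auto simp: apply_vec_def fun_eq_iff)
  show ?case
  proof (cases "b \<in> B")
    case True
    then have w: "\<not> set w \<subseteq> B" using Cons.prems(3) by auto
    have "comp X (ev_letter Y b) w = 0"
      by (rule Cons.IH[OF _ _ w]) (use Cons.prems in \<open>auto simp: ev_letter_def\<close>)
    moreover have "comp (ev_letter X b) (strip Y) w = 0"
      by (rule Cons.IH[OF _ _ w]) (use Cons.prems in \<open>auto simp: ev_letter_def strip_def\<close>)
    ultimately show ?thesis using av by simp
  next
    case False
    then have "ev_letter X b = 0" "ev_letter Y b = 0"
      using Cons.prems(1,2) by (auto simp: ev_letter_def fun_eq_iff)
    then show ?thesis using av by (simp add: comp_zero_left comp_zero_right)
  qed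
qed

lemma order_le_ev_letter_nonzero: "order_le A n \<Longrightarrow> ev_letter A b \<noteq> 0 \<Longrightarrow> n \<noteq> 0"
  by (auto simp: order_le_def ev_letter_def fun_eq_iff)

lemma comp_order_le: "order_le A n \<Longrightarrow> order_le B m \<Longrightarrow> comp A B w \<noteq> 0 \<Longrightarrow> length w \<le> n + m"
proof (induction w arbitrary: A B n m)
  case Nil then show ?case by simp
next
  case (Cons b w)
  consider (vec) "apply_vec A (B []) (b # w) \<noteq> 0" | (right) "comp A (ev_letter B b) w \<noteq> 0"
    | (left) "comp (ev_letter A b) (strip B) w \<noteq> 0"
    using Cons.prems(3) by fastforce
  then show ?case
  proof cases
    case vec
    then obtain b' where "A (b' # b # w) \<noteq> 0" using apply_vec_nonzero by blast
    then show ?thesis using Cons.prems(1) by (fastforce simp: order_le_def)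
  next
    case right
    then have "m \<noteq> 0"
      using order_le_ev_letter_nonzero[OF Cons.prems(2)] comp_zero_right by metis
    moreover have "length w \<le> n + (m - 1)"
      using Cons.IH[OF Cons.prems(1) order_le_ev_letter[OF Cons.prems(2)] right] .
    ultimately show ?thesis by simp
  next
    case left
    then have "n \<noteq> 0"
      using order_le_ev_letter_nonzero[OF Cons.prems(1)] comp_zero_left by metis
    moreover have "order_le (strip B) m" using Cons.prems(2) by (auto simp: order_le_def strip_def)
    then have "length w \<le> (n - 1) + m"
      using Cons.IH[OF order_le_ev_letter[OF Cons.prems(1)] _ left] by blast
    ultimately show ?thesis by simp
  qed
qed

lemma br_ops_zero_right: "br_ops A 0 = 0"
  by (simp add: br_ops_def comp_zero_left comp_zero_right fun_eq_iff)

lemma br_ops_self: "br_ops A A = 0"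
  by (simp add: br_ops_def fun_eq_iff)

lemma br_ops_lincomb_left:
  assumes "finite_supp_vals A" "finite_supp_vals A'"
  shows "br_ops (\<lambda>w c. k * A w c + k' * A' w c) C = (\<lambda>w c. k * br_ops A C w c + k' * br_ops A' C w c)"
  by (simp add: br_ops_def fun_eq_iff comp_lincomb_left comp_lincomb_right[OF assms] algebra_simps)

lemma br_ops_lincomb_right:
  assumes "finite_supp_vals A" "finite_supp_vals A'"
  shows "br_ops C (\<lambda>w c. k * A w c + k' * A' w c) = (\<lambda>w c. k * br_ops C A w c + k' * br_ops C A' w c)"
  by (simp add: br_ops_def fun_eq_iff comp_lincomb_left comp_lincomb_right[OF assms] algebra_simps)

lemma is_op_br_ops:
  assumes A: "is_op B A" and A': "is_op B A'"
  shows "is_op B (br_ops A A')"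
proof -
  obtain n n' where n: "order_le A n" and n': "order_le A' n'" using A A' is_op_order_le by blast
  show ?thesis
  proof (rule is_opI)
    show "order_le (br_ops A A') (n + n')"
      unfolding order_le_def
    proof (intro allI impI)
      fix w assume "br_ops A A' w \<noteq> 0"
      then have "comp A A' w \<noteq> 0 \<or> comp A' A w \<noteq> 0" by (auto simp: br_ops_def)
      then show "length w \<le> n + n'" using comp_order_le[OF n n', of w] comp_order_le[OF n' n, of w] by auto
    qed
    show "is_vec B (br_ops A A' w)" for w
    proof -
      have "is_vec B (\<lambda>c. comp A A' w c - comp A' A w c)"
        by (intro is_vec_diff is_vec_comp) (use A A' is_op_is_vec in auto)
      then show ?thesis by (simp add: br_ops_def fun_diff_def)
    qed
    show "br_ops A A' w = 0" if "\<not> set w \<subseteq> B" for w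
      using comp_outside[OF is_op_outside[OF A] is_op_outside[OF A'] that]
        comp_outside[OF is_op_outside[OF A'] is_op_outside[OF A] that]
      by (simp add: br_ops_def)
    show "br_ops A A' [] = 0"
      using A A' by (simp add: br_ops_def comp_Nil_op is_op_Nil)
  qed
qed

lemma br_ops_Nil: "A [] = 0 \<Longrightarrow> M [] = 0 \<Longrightarrow> br_ops A M [] = 0"
  by (simp add: br_ops_def comp_Nil_op)

lemma is_op_strip_apply_vec:
  assumes A: "is_op B A" and y: "is_vec B y"
  shows "is_op B (strip (apply_vec A y))"
proof -
  obtain n where n: "order_le A n" using A is_op_order_le by blast
  show ?thesis
  proof (rule is_opI)
    show "is_vec B (strip (apply_vec A y) w)" for w
      using is_vec_apply_vec[OF is_op_is_vec[OF A] y] by (simp add: strip_def)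
    show "strip (apply_vec A y) w = 0" if "\<not> set w \<subseteq> B" for w
      using that is_op_outside[OF A, of "_ # w"] by (simp add: strip_def apply_vec_def fun_eq_iff)
    show "order_le (strip (apply_vec A y)) (n - 1)" by (rule order_le_strip_apply_vec[OF n])
  qed (simp add: strip_def)
qed

lemma to_U_eq_zero: "to_U M = 0 \<Longrightarrow> M = 0"
proof -
  assume "to_U M = 0"
  then have s: "strip M = 0" and v: "vec_to_tens (M []) = 0" by (simp_all add: to_U_def zero_prod_def)
  have "M [] c = 0" for c using fun_cong[OF v, of "[c]"] by simp
  then have "M [] = 0" by (simp add: fun_eq_iff)
  show "M = 0"
  proof (rule ext)
    fix w show "M w = 0 w"
      using fun_cong[OF s, of w] \<open>M [] = 0\<close> by (cases "w = []") (simp_all add: strip_def)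
  qed
qed

lemma apply_vec_indicator: "apply_vec A (\<lambda>c. if c = b then 1 else 0) w = A (b # w)"
  by (rule ext) (simp add: apply_vec_superset[of "{b}"] supp_def)

lemma order_le_0_eq_zero: "is_op B A \<Longrightarrow> order_le A 0 \<Longrightarrow> A = 0"
  by (rule ext, case_tac x) (auto simp: order_le_def is_op_Nil)

text \<open>This is the recursion \<open>(A \<circ> M)(x) = A \<circ> M(x) + A(x) \<circ> M\<close> defining \<open>\<circ>\<close> in the paper, which
  \<open>comp\<close> unfolds one letter at a time.\<close>

lemma apply_vec_comp:
  assumes "M [] = 0" "finite_supp_vals M" "finite_supp x"
  shows "apply_vec (comp A M) x w c = comp A (apply_vec M x) w c + comp (apply_vec A x) M w c"
proof -
  have "comp A (apply_vec M x) w c = (\<Sum>b\<in>supp x. x b * comp A (ev_letter M b) w c)"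
    unfolding apply_vec_eq_sum
    by (rule comp_sum_right) (use assms finite_supp_vals_ev_letter in auto)
  moreover have "comp (apply_vec A x) M w c = (\<Sum>b\<in>supp x. x b * comp (ev_letter A b) M w c)"
    unfolding apply_vec_eq_sum by (rule comp_sum_left)
  moreover have "apply_vec (comp A M) x w c
      = (\<Sum>b\<in>supp x. x b * (comp A (ev_letter M b) w c + comp (ev_letter A b) M w c))"
    unfolding apply_vec_def supp_def comp_Cons_op[where B = M, OF assms(1)] by simp
  ultimately show ?thesis by (simp add: distrib_left sum.distrib)
qed

lemma apply_vec_br_ops:
  assumes A: "is_op B A" and A': "is_op B A'" and x: "is_vec B x"
  shows "apply_vec (br_ops A A') x w c =
    br_ops A (strip (apply_vec A' x)) w c - br_ops A' (strip (apply_vec A x)) w c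
    + apply_vec A (apply_vec A' x []) w c - apply_vec A' (apply_vec A x []) w c"
proof -
  have x': "finite_supp x" using x is_vec_finite_supp by blast
  have "apply_vec (br_ops A A') x w c = apply_vec (comp A A') x w c - apply_vec (comp A' A) x w c"
    by (simp add: apply_vec_def br_ops_def algebra_simps sum_subtractf)
  also have "\<dots> = comp A (apply_vec A' x) w c + comp (apply_vec A x) A' w c
      - (comp A' (apply_vec A x) w c + comp (apply_vec A' x) A w c)"
    using apply_vec_comp[OF is_op_Nil[OF A'] is_op_finite_supp_vals[OF A'] x', of A]
      apply_vec_comp[OF is_op_Nil[OF A] is_op_finite_supp_vals[OF A] x', of A'] by simp
  also have "\<dots> = br_ops A (strip (apply_vec A' x)) w c - br_ops A' (strip (apply_vec A x)) w c
    + apply_vec A (apply_vec A' x []) w c - apply_vec A' (apply_vec A x []) w c"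
    by (simp add: comp_strip_right[of A "apply_vec A' x"] comp_strip_right[of A' "apply_vec A x"]
        comp_strip_left[symmetric, of "apply_vec A x"] comp_strip_left[symmetric, of "apply_vec A' x"]
        br_ops_def)
  finally show ?thesis .
qed

lemma to_U_apply_vec_br_ops:
  assumes A: "is_op B A" and A': "is_op B A'" and x: "is_vec B x"
  shows "to_U (apply_vec (br_ops A A') x) =
    (br_ops A (strip (apply_vec A' x)), 0) + to_U (apply_vec A (apply_vec A' x [])) -
    ((br_ops A' (strip (apply_vec A x)), 0) + to_U (apply_vec A' (apply_vec A x [])))"
proof -
  note key = apply_vec_br_ops[OF A A' x]
  have "br_ops A (strip (apply_vec A' x)) [] = 0" "br_ops A' (strip (apply_vec A x)) [] = 0"
    by (rule br_ops_Nil[where A = A, OF is_op_Nil[OF A]], simp add: strip_def)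
       (rule br_ops_Nil[where A = A', OF is_op_Nil[OF A']], simp add: strip_def)
  then have "strip (apply_vec (br_ops A A') x) = br_ops A (strip (apply_vec A' x))
      + strip (apply_vec A (apply_vec A' x [])) - (br_ops A' (strip (apply_vec A x))
      + strip (apply_vec A' (apply_vec A x [])))"
    and "apply_vec (br_ops A A') x [] = apply_vec A (apply_vec A' x []) [] - apply_vec A' (apply_vec A x []) []"
    using key by (auto simp: strip_def fun_eq_iff)
  then show ?thesis by (simp add: to_U_def vec_to_tens_diff)
qed


section \<open>An action of operators on the free Lie algebra\<close>

definition word_tens :: "'b list \<Rightarrow> ('b,'k::zero_neq_one) tens" where
  "word_tens g = (\<lambda>e. if g = e then 1 else 0)"

text \<open>The action of \<open>A\<close> on a word \<open>g\<close> has operator part \<open>A(g)\<close> (\<open>act_op\<close>) and tensor part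
  \<open>act_lie_word A g\<close>, computed by \<open>[[A, b g]] = b [[A, g]] + A[b] g + [[A(b), g]]\<close>, where \<open>A[b] \<in> U\<^sub>1\<close> is
  the value of \<open>A\<close> at the one-letter word \<open>b\<close> and \<open>A(b) = ev_letter A b\<close>.\<close>

fun act_lie_word :: "('b,'k::comm_ring_1) opr \<Rightarrow> 'b list \<Rightarrow> ('b,'k) tens" where
  "act_lie_word A [] = 0"
| "act_lie_word A (b # g) = tmul (word_tens [b]) (act_lie_word A g)
     + tmul (vec_to_tens (A [b])) (word_tens g) + act_lie_word (ev_letter A b) g"

definition act_lie :: "('b,'k::comm_ring_1) opr \<Rightarrow> ('b,'k) tens \<Rightarrow> ('b,'k) tens" where
  "act_lie A u = (\<lambda>e. lin_ext u (\<lambda>g. act_lie_word A g e))"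

definition act_op :: "('b,'k::comm_ring_1) opr \<Rightarrow> ('b,'k) tens \<Rightarrow> ('b,'k) opr" where
  "act_op A u = (\<lambda>w c. if w = [] then 0 else lin_ext u (\<lambda>g. A (g @ w) c))"

definition std_act :: "('b,'k::comm_ring_1) opr \<Rightarrow> ('b,'k) tens \<Rightarrow> ('b,'k) elt" where
  "std_act A u = (act_op A u, act_lie A u)"

lemma word_tens_single: "word_tens [b] = vec_to_tens (\<lambda>c. if c = b then 1 else 0)"
  by (rule ext) (simp add: word_tens_def vec_to_tens_def split: list.split)

lemma act_lie_word_cong: "(\<And>w. w \<noteq> [] \<Longrightarrow> A w = A' w) \<Longrightarrow> act_lie_word A g = act_lie_word A' g"
proof (induction g arbitrary: A A')
  case (Cons b g)
  have "act_lie_word (ev_letter A b) g = act_lie_word (ev_letter A' b) g"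
    by (rule Cons.IH) (simp add: ev_letter_def Cons.prems)
  moreover have "act_lie_word A g = act_lie_word A' g"
    by (rule Cons.IH) (simp add: Cons.prems)
  ultimately show ?case using Cons.prems[of "[b]"] by simp
qed simp

lemma act_lie_word_sum:
  "act_lie_word (\<lambda>w c. \<Sum>i\<in>I. f i * A i w c) g = (\<lambda>x. \<Sum>i\<in>I. f i * act_lie_word (A i) g x)"
proof (induction g arbitrary: A)
  case (Cons b g)
  have ev: "ev_letter (\<lambda>w c. \<Sum>i\<in>I. f i * A i w c) b = (\<lambda>w c. \<Sum>i\<in>I. f i * ev_letter (A i) b w c)"
    by (simp add: ev_letter_def)
  have letter: "tmul (word_tens [b]) (\<lambda>x. \<Sum>i\<in>I. f i * T i x) = (\<lambda>x. \<Sum>i\<in>I. f i * tmul (word_tens [b]) (T i) x)"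
    for T
    by (rule ext, case_tac x) (simp_all add: word_tens_single sum_distrib_left mult.left_commute)
  have vec: "tmul (vec_to_tens (\<lambda>c. \<Sum>i\<in>I. f i * y i c)) h = (\<lambda>x. \<Sum>i\<in>I. f i * tmul (vec_to_tens (y i)) h x)"
    for y h
    by (rule ext, case_tac x) (simp_all add: sum_distrib_right mult.assoc)
  show ?case
    by (rule ext) (simp only: act_lie_word.simps ev letter vec Cons.IH plus_fun_apply sum.distrib
        distrib_left)
qed (simp add: zero_fun_def)

lemma act_lie_word_single: "act_lie_word A [b] = vec_to_tens (A [b])"
  by (rule ext, case_tac x) (simp_all add: word_tens_def)

lemma act_lie_sum_left:
  "act_lie (\<lambda>w c. \<Sum>i\<in>I. f i * A i w c) u = (\<lambda>e. \<Sum>i\<in>I. f i * act_lie (A i) u e)"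
  by (rule ext) (simp add: act_lie_def act_lie_word_sum lin_ext_sum_right lin_ext_scale_right)

lemma act_lie_lincomb_left:
  "act_lie (\<lambda>w c. k * A w c + k' * A' w c) u = (\<lambda>e. k * act_lie A u e + k' * act_lie A' u e)"
  using act_lie_sum_left[of "\<lambda>i. if i then k else k'" "\<lambda>i. if i then A else A'" "{True, False}" u]
  by simp

lemma act_lie_add_left: "act_lie (\<lambda>w c. A w c + A' w c) u = act_lie A u + act_lie A' u"
  using act_lie_lincomb_left[of 1 A 1 A' u] by (simp add: plus_fun_def)

lemma act_lie_diff_left: "act_lie (\<lambda>w c. A w c - A' w c) u = act_lie A u - act_lie A' u"
  using act_lie_lincomb_left[of 1 A "-1" A' u] by (simp add: fun_diff_def)

lemma act_lie_scale_left: "act_lie (\<lambda>w c. k * A w c) u = (\<lambda>e. k * act_lie A u e)"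
  using act_lie_lincomb_left[of k A 0 A u] by simp

lemma act_lie_cong_left: "(\<And>w. w \<noteq> [] \<Longrightarrow> A w = A' w) \<Longrightarrow> act_lie A u = act_lie A' u"
  unfolding act_lie_def using act_lie_word_cong[of A A'] by simp

lemma act_lie_add_right: "finite_supp u \<Longrightarrow> finite_supp v \<Longrightarrow> act_lie A (u + v) = act_lie A u + act_lie A v"
  by (rule ext) (simp add: act_lie_def lin_ext_add_left)

lemma act_lie_diff_right: "finite_supp u \<Longrightarrow> finite_supp v \<Longrightarrow> act_lie A (u - v) = act_lie A u - act_lie A v"
  by (rule ext) (simp add: act_lie_def lin_ext_diff_left)

lemma act_lie_scale_right: "finite_supp u \<Longrightarrow> act_lie A (\<lambda>w. c * u w) = (\<lambda>e. c * act_lie A u e)"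
  by (rule ext) (simp add: act_lie_def lin_ext_scale_left)

lemma act_op_add: "finite_supp u \<Longrightarrow> finite_supp v \<Longrightarrow> act_op A (u + v) = (\<lambda>w c. act_op A u w c + act_op A v w c)"
  by (simp add: act_op_def lin_ext_add_left fun_eq_iff)

lemma act_op_diff: "finite_supp u \<Longrightarrow> finite_supp v \<Longrightarrow> act_op A (u - v) = (\<lambda>w c. act_op A u w c - act_op A v w c)"
  by (simp add: act_op_def lin_ext_diff_left fun_eq_iff)

lemma act_op_scale: "finite_supp u \<Longrightarrow> act_op A (\<lambda>w. k * u w) = (\<lambda>w c. k * act_op A u w c)"
  by (simp add: act_op_def lin_ext_scale_left fun_eq_iff)

lemma act_op_act_op:
  assumes "finite_supp u" "finite_supp v"
  shows "act_op (act_op A u) v = act_op A (tmul u v)"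
proof (intro ext)
  fix w c
  show "act_op (act_op A u) v w c = act_op A (tmul u v) w c"
  proof (cases "w = []")
    case False
    then have "act_op (act_op A u) v w c = lin_ext v (\<lambda>b. lin_ext u (\<lambda>a. A (a @ b @ w) c))"
      by (simp add: act_op_def)
    also have "\<dots> = lin_ext u (\<lambda>a. lin_ext v (\<lambda>b. A (a @ b @ w) c))"
      by (rule lin_ext_swap[symmetric])
    also have "\<dots> = act_op A (tmul u v) w c"
      using False assms by (simp add: act_op_def lin_ext_tmul)
    finally show ?thesis .
  qed (simp add: act_op_def)
qed

lemma act_op_vec_to_tens:
  "finite_supp x \<Longrightarrow> act_op A (vec_to_tens x) = (\<lambda>w c. if w = [] then 0 else (\<Sum>b\<in>supp x. x b * A (b # w) c))"
  by (simp add: act_op_def lin_ext_vec_to_tens fun_eq_iff)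

lemma act_lie_vec_to_tens:
  assumes "finite_supp x"
  shows "act_lie A (vec_to_tens x) = vec_to_tens (\<lambda>c. \<Sum>b\<in>supp x. x b * A [b] c)"
proof (rule ext)
  fix e
  have "act_lie A (vec_to_tens x) e = (\<Sum>b\<in>supp x. x b * vec_to_tens (A [b]) e)"
    unfolding act_lie_def by (simp only: lin_ext_vec_to_tens[OF assms] act_lie_word_single)
  then show "act_lie A (vec_to_tens x) e = vec_to_tens (\<lambda>c. \<Sum>b\<in>supp x. x b * A [b] c) e"
    by (cases e) simp_all
qed

lemma std_act_vec_to_tens: "finite_supp x \<Longrightarrow> std_act A (vec_to_tens x) = to_U (apply_vec A x)"
  by (simp add: std_act_def to_U_def act_op_vec_to_tens act_lie_vec_to_tens strip_def apply_vec_def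
      supp_def fun_eq_iff)

lemma lin_ext_word_tens: "finite_supp u \<Longrightarrow> lin_ext u (\<lambda>d. word_tens d e) = u e"
  unfolding word_tens_def by (rule lin_ext_indicator)

lemma act_lie_tmul_vec_to_tens:
  assumes x: "finite_supp x" and w: "finite_supp w"
  shows "act_lie A (tmul (vec_to_tens x) w) = tmul (act_lie A (vec_to_tens x)) w
    + tmul (vec_to_tens x) (act_lie A w) + act_lie (act_op A (vec_to_tens x)) w"
proof (rule ext)
  fix e
  have "act_lie A (tmul (vec_to_tens x) w) e = (\<Sum>b\<in>supp x. x b * lin_ext w (\<lambda>d. act_lie_word A (b # d) e))"
    by (simp add: act_lie_def lin_ext_tmul_vec_to_tens x w)
  also have "\<dots> = (\<Sum>b\<in>supp x. x b * tmul (word_tens [b]) (act_lie A w) e)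
      + (\<Sum>b\<in>supp x. x b * tmul (vec_to_tens (A [b])) w e)
      + (\<Sum>b\<in>supp x. x b * act_lie (ev_letter A b) w e)"
    by (simp add: lin_ext_add_right word_tens_single lin_ext_tmul_vec_to_tens_right
        lin_ext_word_tens[OF w] act_lie_def distrib_left sum.distrib del: tmul_vec_to_tens_Cons)
  also have "(\<Sum>b\<in>supp x. x b * tmul (word_tens [b]) (act_lie A w) e) = tmul (vec_to_tens x) (act_lie A w) e"
    by (simp add: word_tens_single tmul_vec_to_tens_eq_sum[OF x] del: tmul_vec_to_tens_Cons)
  also have "(\<Sum>b\<in>supp x. x b * tmul (vec_to_tens (A [b])) w e) = tmul (act_lie A (vec_to_tens x)) w e"
    by (cases e) (simp_all add: act_lie_vec_to_tens x sum_distrib_right mult.assoc)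
  also have "(\<Sum>b\<in>supp x. x b * act_lie (ev_letter A b) w e) = act_lie (act_op A (vec_to_tens x)) w e"
  proof -
    have "act_lie (act_op A (vec_to_tens x)) w = act_lie (\<lambda>v c. \<Sum>b\<in>supp x. x b * ev_letter A b v c) w"
      by (rule act_lie_cong_left) (simp add: act_op_vec_to_tens x ev_letter_def fun_eq_iff)
    then show ?thesis by (simp add: act_lie_sum_left)
  qed
  finally show "act_lie A (tmul (vec_to_tens x) w) e = (tmul (act_lie A (vec_to_tens x)) w
    + tmul (vec_to_tens x) (act_lie A w) + act_lie (act_op A (vec_to_tens x)) w) e"
    by (simp add: add_ac)
qed

text \<open>The Leibniz rule passes from \<open>u\<close> and \<open>v\<close> to their commutator, although not to their product:
  for \<open>u v\<close> it leaves the cross terms \<open>u \<cdot> act_lie (act_op A v) w + v \<cdot> act_lie (act_op A u) w\<close>,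
  which cancel only in the commutator.\<close>

lemma act_lie_tmul_tbr:
  assumes fu: "finite_supp u" and fv: "finite_supp v" and fw: "finite_supp w"
    and IHu: "\<And>A w. finite_supp w \<Longrightarrow>
      act_lie A (tmul u w) = tmul (act_lie A u) w + tmul u (act_lie A w) + act_lie (act_op A u) w"
    and IHv: "\<And>A w. finite_supp w \<Longrightarrow>
      act_lie A (tmul v w) = tmul (act_lie A v) w + tmul v (act_lie A w) + act_lie (act_op A v) w"
  shows "act_lie A (tmul (tbr u v) w)
    = tmul (act_lie A (tbr u v)) w + tmul (tbr u v) (act_lie A w) + act_lie (act_op A (tbr u v)) w"
proof -
  have fuw: "finite_supp (tmul u w)" and fvw: "finite_supp (tmul v w)"
    and fuv: "finite_supp (tmul u v)" and fvu: "finite_supp (tmul v u)"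
    using fu fv fw by (auto intro: finite_supp_tmul)
  have L: "act_lie A (tmul (tbr u v) w) = act_lie A (tmul u (tmul v w)) - act_lie A (tmul v (tmul u w))"
    by (simp add: tbr_def tmul_diff_left tmul_assoc act_lie_diff_right finite_supp_tmul fu fv fw)
  have R1: "act_lie A (tbr u v) = act_lie A (tmul u v) - act_lie A (tmul v u)"
    by (simp add: tbr_def act_lie_diff_right fuv fvu)
  have R3: "act_lie (act_op A (tbr u v)) w = act_lie (act_op (act_op A u) v) w - act_lie (act_op (act_op A v) u) w"
    by (simp add: tbr_def act_op_diff fuv fvu act_lie_diff_left act_op_act_op fu fv)
  show ?thesis
    unfolding L R1 R3 IHu[OF fvw] IHv[OF fuw] IHu[OF fv] IHv[OF fu] IHu[OF fw] IHv[OF fw]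
    by (simp add: tbr_def tmul_add_left tmul_add_right tmul_diff_left tmul_diff_right tmul_assoc
        algebra_simps)
qed

lemma act_lie_tmul:
  assumes "v \<in> lie_poly B" "finite_supp w"
  shows "act_lie A (tmul v w) = tmul (act_lie A v) w + tmul v (act_lie A w) + act_lie (act_op A v) w"
  using assms
proof (induction arbitrary: A w rule: lie_poly.induct)
  case (gen x)
  then show ?case using act_lie_tmul_vec_to_tens is_vec_finite_supp by blast
next
  case (add u v)
  have fu: "finite_supp u" and fv: "finite_supp v" using add.hyps finite_supp_lie_poly by auto
  have fw: "finite_supp (tmul u w)" "finite_supp (tmul v w)"
    using fu fv add.prems by (auto intro: finite_supp_tmul)
  have "act_lie A (tmul (u + v) w) = act_lie A (tmul u w) + act_lie A (tmul v w)"
    by (simp only: tmul_add_left act_lie_add_right[OF fw])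
  also have "\<dots> = tmul (act_lie A (u + v)) w + tmul (u + v) (act_lie A w) + act_lie (act_op A (u + v)) w"
    by (simp only: add.IH[OF add.prems] act_lie_add_right[OF fu fv] act_op_add[OF fu fv]
        act_lie_add_left tmul_add_left tmul_add_right add_ac)
  finally show ?case .
next
  case (smult u c)
  have "finite_supp u" using smult.hyps finite_supp_lie_poly by auto
  then show ?case
    using smult.prems smult.IH[OF smult.prems]
    by (simp add: tmul_scale_left act_lie_scale_right finite_supp_tmul act_op_scale act_lie_scale_left
        distrib_left fun_eq_iff)
next
  case (brk u v)
  show ?case
    using act_lie_tmul_tbr[OF brk.hyps[THEN finite_supp_lie_poly] brk.prems brk.IH] .
qed

lemma act_lie_tbr:
  assumes u: "u \<in> lie_poly B" and v: "v \<in> lie_poly B"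
  shows "act_lie A (tbr u v) = tbr (act_lie A u) v + act_lie (act_op A u) v - (tbr (act_lie A v) u + act_lie (act_op A v) u)"
proof -
  have fu: "finite_supp u" and fv: "finite_supp v" using u v finite_supp_lie_poly by auto
  show ?thesis
    by (simp add: tbr_def act_lie_diff_right finite_supp_tmul fu fv act_lie_tmul[OF u fv]
        act_lie_tmul[OF v fu] algebra_simps)
qed

lemma act_op_tbr:
  assumes "finite_supp u" "finite_supp v"
  shows "act_op A (tbr u v) = (\<lambda>w c. act_op (act_op A u) v w c - act_op (act_op A v) u w c)"
  by (simp add: tbr_def act_op_diff finite_supp_tmul assms act_op_act_op)

lemma is_op_act_op:
  assumes A: "is_op B A" and u: "finite_supp u"
  shows "is_op B (act_op A u)"
proof -
  obtain n where n: "order_le A n" using A is_op_order_le by blast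
  show ?thesis
  proof (rule is_opI)
    show "is_vec B (act_op A u w)" for w
      using is_vec_lincomb[of "supp u" B "\<lambda>g. A (g @ w)" u] u is_op_is_vec[OF A]
      by (simp add: act_op_def lin_ext_def is_vec_def)
    show "act_op A u w = 0" if "\<not> set w \<subseteq> B" for w
      using that is_op_outside[OF A] by (auto simp: act_op_def lin_ext_def fun_eq_iff)
    show "order_le (act_op A u) n"
      unfolding order_le_def
    proof (intro allI impI)
      fix w assume "act_op A u w \<noteq> 0"
      then obtain c where "lin_ext u (\<lambda>g. A (g @ w) c) \<noteq> 0"
        by (auto simp: act_op_def fun_eq_iff split: if_splits)
      then obtain g where "A (g @ w) c \<noteq> 0"
        unfolding lin_ext_def by (metis (no_types, lifting) mult_zero_right sum.neutral)
      then show "length w \<le> n" using n by (force simp: order_le_def fun_eq_iff)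
    qed
  qed (simp add: act_op_def fun_eq_iff)
qed

lemma act_lie_in_lie_poly:
  assumes "u \<in> lie_poly B" "is_op B A"
  shows "act_lie A u \<in> lie_poly B"
  using assms
proof (induction arbitrary: A rule: lie_poly.induct)
  case (gen x)
  have "is_vec B (\<lambda>c. \<Sum>b\<in>supp x. x b * A [b] c)"
    by (rule is_vec_lincomb) (use gen is_vec_finite_supp is_op_is_vec in auto)
  then show ?case
    using act_lie_vec_to_tens[OF is_vec_finite_supp[OF gen.hyps]] by (simp add: lie_poly.gen)
next
  case (add u v)
  have "act_lie A (u + v) = act_lie A u + act_lie A v"
    using add.hyps by (simp add: act_lie_add_right finite_supp_lie_poly)
  then have "act_lie A (u + v) \<in> lie_poly B"
    by (simp only: lie_poly.add add.IH add.prems)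
  then show ?case by (simp only: plus_fun_def)
next
  case (smult u c)
  then show ?case by (simp add: act_lie_scale_right finite_supp_lie_poly lie_poly.smult)
next
  case (brk u v)
  have "is_op B (act_op A u)" "is_op B (act_op A v)"
    using brk.prems brk.hyps by (auto intro: is_op_act_op finite_supp_lie_poly)
  then show ?case
    unfolding act_lie_tbr[OF brk.hyps]
    by (intro lie_poly_diff lie_poly.add lie_poly.brk brk.hyps brk.IH brk.prems)
qed

lemma act_op_zero: "act_op 0 u = 0"
  by (simp add: act_op_def fun_eq_iff)

lemma act_lie_zero: "act_lie 0 u = 0"
  using act_lie_scale_left[of 0 0 u] by (simp add: zero_fun_def)

lemma std_act_tbr:
  assumes v: "v \<in> lie_poly B" and w: "w \<in> lie_poly B"
  shows "std_act A (tbr v w) = brU_with std_act (std_act A v) (0, w) - brU_with std_act (std_act A w) (0, v)"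
proof -
  have fv: "finite_supp v" and fw: "finite_supp w" using v w finite_supp_lie_poly by auto
  have br: "brU_with std_act (M, T) (0, y) = (act_op M y, act_lie M y + tbr T y)" for M T y
    by (simp add: brU_with_def br_ops_zero_right std_act_def act_op_zero act_lie_zero zero_prod_def)
  show ?thesis
    unfolding std_act_def[of A] br
    by (simp add: act_lie_tbr[OF v w] act_op_tbr fv fw fun_eq_iff algebra_simps)
qed

lemma is_action_std_act: "is_action B (std_act :: ('b,'k::comm_ring_1) opr \<Rightarrow> ('b,'k) tens \<Rightarrow> ('b,'k) elt)"
  unfolding is_action_def
proof (intro conjI allI impI; elim conjE)
  fix A :: "('b,'k) opr" and u :: "('b,'k) tens"
  assume "is_op B A" "u \<in> lie_poly B"
  then show "std_act A u \<in> Ucar B"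
    by (simp add: std_act_def Ucar_def is_op_act_op finite_supp_lie_poly act_lie_in_lie_poly)
  show "std_act A (\<lambda>w. c * u w) = scaleU c (std_act A u)" for c
    using finite_supp_lie_poly[OF \<open>u \<in> lie_poly B\<close>]
    by (simp add: std_act_def scaleU_def act_lie_scale_right act_op_scale)
  show "std_act (\<lambda>w b. c * A w b) u = scaleU c (std_act A u)" for c
    by (simp add: std_act_def scaleU_def act_lie_scale_left act_op_def lin_ext_scale_right fun_eq_iff)
  show "std_act (A + A') u = std_act A u + std_act A' u" for A'
    using act_lie_add_left[of A A' u]
    by (simp add: std_act_def act_op_def lin_ext_add_right plus_fun_def fun_eq_iff)
next
  fix A :: "('b,'k) opr" and u u' :: "('b,'k) tens"
  assume "u \<in> lie_poly B" "u' \<in> lie_poly B"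
  then show "std_act A (u + u') = std_act A u + std_act A u'"
    by (simp add: std_act_def act_op_add act_lie_add_right finite_supp_lie_poly fun_eq_iff)
next
  fix A :: "('b,'k) opr" and x :: "('b,'k) vec"
  assume "is_vec B x"
  then show "std_act A (vec_to_tens x) = to_U (apply_vec A x)"
    by (simp add: std_act_vec_to_tens is_vec_finite_supp)
next
  fix A :: "('b,'k) opr" and v w :: "('b,'k) tens"
  assume "v \<in> lie_poly B" "w \<in> lie_poly B"
  then show "std_act A (tbr v w) = brU_with std_act (std_act A v) (0, w) - brU_with std_act (std_act A w) (0, v)"
    by (rule std_act_tbr)
qed

lemma actU_is_action: "is_action B (actU B :: ('b,'k::comm_ring_1) opr \<Rightarrow> ('b,'k) tens \<Rightarrow> ('b,'k) elt)"
  unfolding actU_def by (rule someI[of "is_action B", OF is_action_std_act])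


section \<open>Biadditive alternating brackets\<close>

locale alt_bracket =
  fixes V :: "'a::ab_group_add set" and br :: "'a \<Rightarrow> 'a \<Rightarrow> 'a"
  assumes zero_closed: "0 \<in> V"
    and add_closed: "x \<in> V \<Longrightarrow> y \<in> V \<Longrightarrow> x + y \<in> V"
    and uminus_closed: "x \<in> V \<Longrightarrow> - x \<in> V"
    and br_closed: "x \<in> V \<Longrightarrow> y \<in> V \<Longrightarrow> br x y \<in> V"
    and br_distrib_left: "x \<in> V \<Longrightarrow> y \<in> V \<Longrightarrow> z \<in> V \<Longrightarrow> br (x + y) z = br x z + br y z"
    and br_distrib_right: "x \<in> V \<Longrightarrow> y \<in> V \<Longrightarrow> z \<in> V \<Longrightarrow> br z (x + y) = br z x + br z y"
    and br_alternating: "x \<in> V \<Longrightarrow> br x x = 0"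
begin

definition jacobiator :: "'a \<Rightarrow> 'a \<Rightarrow> 'a \<Rightarrow> 'a" where
  "jacobiator x y z = br x (br y z) + br y (br z x) + br z (br x y)"

lemma br_zero_left: "z \<in> V \<Longrightarrow> br 0 z = 0"
  using br_distrib_left[OF zero_closed zero_closed, of z] by simp

lemma br_zero_right: "z \<in> V \<Longrightarrow> br z 0 = 0"
  using br_distrib_right[OF zero_closed zero_closed, of z] by simp

lemma br_uminus_right: "x \<in> V \<Longrightarrow> z \<in> V \<Longrightarrow> br z (- x) = - br z x"
  using br_distrib_right[OF _ uminus_closed, of x x z] br_zero_right[of z]
  by (simp add: eq_neg_iff_add_eq_0 add.commute)

lemma br_diff_left: "x \<in> V \<Longrightarrow> y \<in> V \<Longrightarrow> z \<in> V \<Longrightarrow> br (x - y) z = br x z - br y z"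
  using br_distrib_left[OF _ uminus_closed, of x y z] br_distrib_left[OF _ uminus_closed, of y y z]
    br_zero_left[of z] by (simp add: eq_neg_iff_add_eq_0 add.commute)

lemma br_diff_right: "x \<in> V \<Longrightarrow> y \<in> V \<Longrightarrow> z \<in> V \<Longrightarrow> br z (x - y) = br z x - br z y"
  using br_distrib_right[OF _ uminus_closed, of x y z] br_uminus_right[of y z] by simp

lemma br_antisym: "x \<in> V \<Longrightarrow> y \<in> V \<Longrightarrow> br x y = - br y x"
  using br_alternating[OF add_closed, of x y] br_distrib_left[of x y "x + y"]
    br_distrib_right[of x y x] br_distrib_right[of x y y] br_alternating[of x] br_alternating[of y]
    add_closed[of x y]
  by (simp add: eq_neg_iff_add_eq_0)

lemma jacobiator_cycle: "jacobiator x y z = jacobiator y z x"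
  by (simp add: jacobiator_def add_ac)

lemma jacobiator_swap: "x \<in> V \<Longrightarrow> y \<in> V \<Longrightarrow> z \<in> V \<Longrightarrow> jacobiator y x z = - jacobiator x y z"
  using br_antisym[of x z] br_antisym[of z y] br_antisym[of y x] br_uminus_right[OF br_closed, of z x y]
    br_uminus_right[OF br_closed, of y z x] br_uminus_right[OF br_closed, of x y z]
  by (simp add: jacobiator_def)

lemma jacobiator_eq:
  "x \<in> V \<Longrightarrow> y \<in> V \<Longrightarrow> z \<in> V \<Longrightarrow> jacobiator x y z = br x (br y z) - br (br x y) z - br y (br x z)"
  using br_antisym[of z x] br_uminus_right[OF br_closed, of x z y] br_antisym[OF _ br_closed, of z x y]
  by (simp add: jacobiator_def)

lemma br_leibniz:
  "x \<in> V \<Longrightarrow> y \<in> V \<Longrightarrow> z \<in> V \<Longrightarrow> jacobiator x y z = 0 \<Longrightarrow> br x (br y z) = br (br x y) z + br y (br x z)"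
  by (simp add: jacobiator_eq algebra_simps)

lemma jacobiator_add1:
  "x \<in> V \<Longrightarrow> x' \<in> V \<Longrightarrow> y \<in> V \<Longrightarrow> z \<in> V \<Longrightarrow> jacobiator (x + x') y z = jacobiator x y z + jacobiator x' y z"
  unfolding jacobiator_def by (simp add: br_distrib_left br_distrib_right br_closed add_ac)

lemma jacobiator_add2:
  "x \<in> V \<Longrightarrow> y \<in> V \<Longrightarrow> y' \<in> V \<Longrightarrow> z \<in> V \<Longrightarrow> jacobiator x (y + y') z = jacobiator x y z + jacobiator x y' z"
  using jacobiator_add1[of y y' z x] by (simp add: jacobiator_cycle[of x])

lemma jacobiator_add3:
  "x \<in> V \<Longrightarrow> y \<in> V \<Longrightarrow> z \<in> V \<Longrightarrow> z' \<in> V \<Longrightarrow> jacobiator x y (z + z') = jacobiator x y z + jacobiator x y z'"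
  using jacobiator_add1[of z z' x y] by (simp add: jacobiator_cycle[of _ x y])

lemma jacobiator_zero1: "y \<in> V \<Longrightarrow> z \<in> V \<Longrightarrow> jacobiator 0 y z = 0"
  by (simp add: jacobiator_def br_zero_left br_zero_right br_closed)

lemma jacobiator_zero_any:
  "x \<in> V \<Longrightarrow> y \<in> V \<Longrightarrow> z \<in> V \<Longrightarrow> x = 0 \<or> y = 0 \<or> z = 0 \<Longrightarrow> jacobiator x y z = 0"
  using jacobiator_zero1 jacobiator_cycle by metis

text \<open>Only four of the eight orderings of summands need checking; the others follow by cycling.\<close>

lemma jacobi_by_decomposition:
  assumes PV: "P \<subseteq> V" and LV: "L \<subseteq> V"
    and split: "\<And>x. x \<in> V \<Longrightarrow> \<exists>p\<in>P. \<exists>l\<in>L. x = p + l"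
    and ooo: "\<And>a b c. a \<in> P \<Longrightarrow> b \<in> P \<Longrightarrow> c \<in> P \<Longrightarrow> jacobiator a b c = 0"
    and ool: "\<And>a b c. a \<in> P \<Longrightarrow> b \<in> P \<Longrightarrow> c \<in> L \<Longrightarrow> jacobiator a b c = 0"
    and oll: "\<And>a b c. a \<in> P \<Longrightarrow> b \<in> L \<Longrightarrow> c \<in> L \<Longrightarrow> jacobiator a b c = 0"
    and lll: "\<And>a b c. a \<in> L \<Longrightarrow> b \<in> L \<Longrightarrow> c \<in> L \<Longrightarrow> jacobiator a b c = 0"
    and x: "x \<in> V" and y: "y \<in> V" and z: "z \<in> V"
  shows "jacobiator x y z = 0"
proof -
  obtain o1 l1 where 1: "o1 \<in> P" "l1 \<in> L" "x = o1 + l1" using split[OF x] by blast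
  obtain o2 l2 where 2: "o2 \<in> P" "l2 \<in> L" "y = o2 + l2" using split[OF y] by blast
  obtain o3 l3 where 3: "o3 \<in> P" "l3 \<in> L" "z = o3 + l3" using split[OF z] by blast
  have V: "o1 \<in> V" "l1 \<in> V" "o2 \<in> V" "l2 \<in> V" "o3 \<in> V" "l3 \<in> V" using 1 2 3 PV LV by auto
  have olo: "jacobiator a b c = 0" if "a \<in> P" "b \<in> L" "c \<in> P" for a b c
    using ool[OF that(3) that(1) that(2)] jacobiator_cycle[of c a b] by simp
  have loo: "jacobiator a b c = 0" if "a \<in> L" "b \<in> P" "c \<in> P" for a b c
    using ool[OF that(2) that(3) that(1)] jacobiator_cycle[of a b c] by simp
  have lol: "jacobiator a b c = 0" if "a \<in> L" "b \<in> P" "c \<in> L" for a b c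
    using oll[OF that(2) that(3) that(1)] jacobiator_cycle[of a b c] by simp
  have llo: "jacobiator a b c = 0" if "a \<in> L" "b \<in> L" "c \<in> P" for a b c
    using oll[OF that(3) that(1) that(2)] jacobiator_cycle[of c a b] by simp
  show ?thesis
    unfolding 1(3) 2(3) 3(3) using V 1 2 3
    by (simp add: jacobiator_add1 jacobiator_add2 jacobiator_add3 add_closed ooo ool oll lll olo loo lol llo)
qed

text \<open>For \<open>a \<in> P\<close>, \<open>br a\<close> acts as a derivation on brackets with \<open>v\<close> or \<open>w\<close>; the commutator of
  \<open>br a\<close> and \<open>br b\<close> is then one as well, so it agrees with \<open>br (br a b)\<close> on \<open>br v w\<close> because it
  does on \<open>v\<close> and \<open>w\<close>.\<close>

lemma jacobiator_br_vanishes: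
  assumes PV: "P \<subseteq> V" and LV: "L \<subseteq> V"
    and split: "\<And>x. x \<in> V \<Longrightarrow> \<exists>p\<in>P. \<exists>l\<in>L. x = p + l"
    and P_br: "\<And>a b. a \<in> P \<Longrightarrow> b \<in> P \<Longrightarrow> br a b \<in> P"
    and oll: "\<And>a b c. a \<in> P \<Longrightarrow> b \<in> L \<Longrightarrow> c \<in> L \<Longrightarrow> jacobiator a b c = 0"
    and a: "a \<in> P" and b: "b \<in> P" and v: "v \<in> L" and w: "w \<in> L"
    and IHv: "\<And>a b. a \<in> P \<Longrightarrow> b \<in> P \<Longrightarrow> jacobiator a b v = 0"
    and IHw: "\<And>a b. a \<in> P \<Longrightarrow> b \<in> P \<Longrightarrow> jacobiator a b w = 0"
  shows "jacobiator a b (br v w) = 0"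
proof -
  have aV: "a \<in> V" and bV: "b \<in> V" and vV: "v \<in> V" and wV: "w \<in> V" using a b v w PV LV by auto
  have der2: "jacobiator p x u = 0" if p: "p \<in> P" and x: "x \<in> V" and u: "u \<in> {v, w}" for p x u
  proof -
    obtain q l where ql: "q \<in> P" "l \<in> L" "x = q + l" using split[OF x] by blast
    have "jacobiator p x u = jacobiator p q u + jacobiator p l u"
      unfolding ql(3) by (rule jacobiator_add2) (use ql PV LV p u vV wV in auto)
    then show ?thesis using IHv[OF p ql(1)] IHw[OF p ql(1)] oll[OF p ql(2)] u v w by auto
  qed
  have der3: "jacobiator p u x = 0" if p: "p \<in> P" and x: "x \<in> V" and u: "u \<in> {v, w}" for p x u
    using jacobiator_swap[of p x u] jacobiator_cycle[of p u x] jacobiator_cycle[of u x p]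
      der2[OF p x u] PV p x u vV wV by auto
  have D: "br p (br x y) = br (br p x) y + br x (br p y)"
    if "p \<in> P" "x \<in> V" "y \<in> V" "jacobiator p x y = 0" for p x y
    using that PV by (intro br_leibniz) auto
  have bvw: "br (br a b) (br v w) = br (br (br a b) v) w + br v (br (br a b) w)"
    by (rule D[OF P_br[OF a b] vV wV oll[OF P_br[OF a b] v w]])
  have "br a (br b (br v w)) - br b (br a (br v w))
     = br (br a (br b v) - br b (br a v)) w + br v (br a (br b w) - br b (br a w))"
    using D[OF b vV wV oll[OF b v w]] D[OF a vV wV oll[OF a v w]]
      D[OF a br_closed[OF bV vV] wV der2[OF a br_closed[OF bV vV]]]
      D[OF a vV br_closed[OF bV wV] der3[OF a br_closed[OF bV wV]]]
      D[OF b br_closed[OF aV vV] wV der2[OF b br_closed[OF aV vV]]]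
      D[OF b vV br_closed[OF aV wV] der3[OF b br_closed[OF aV wV]]]
      br_distrib_right br_diff_left br_diff_right br_closed aV bV vV wV
    by (simp add: algebra_simps)
  also have "\<dots> = br (br a b) (br v w)"
    using br_leibniz[OF aV bV vV] br_leibniz[OF aV bV wV] IHv[OF a b] IHw[OF a b] bvw
      br_closed aV bV vV wV by (simp add: algebra_simps)
  finally show ?thesis using jacobiator_eq[OF aV bV br_closed[OF vV wV]] by (simp add: algebra_simps)
qed

lemma br_jacobiator:
  assumes PV: "P \<subseteq> V" and P_br: "\<And>a b. a \<in> P \<Longrightarrow> b \<in> P \<Longrightarrow> br a b \<in> P"
    and x: "x \<in> V" and Jx: "\<And>p q. p \<in> P \<Longrightarrow> q \<in> P \<Longrightarrow> jacobiator p q x = 0"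
    and a: "a \<in> P" and b: "b \<in> P" and c: "c \<in> P"
  shows "br (jacobiator a b c) x = jacobiator a b (br c x) + jacobiator a (br b x) c + jacobiator (br a x) b c"
proof -
  have aV: "a \<in> V" and bV: "b \<in> V" and cV: "c \<in> V" using a b c PV by auto
  have der: "br (br p q) x = br p (br q x) + br (br p x) q" if "p \<in> P" "q \<in> P" for p q
  proof -
    have pV: "p \<in> V" and qV: "q \<in> V" using that PV by auto
    show ?thesis
      using br_leibniz[OF pV qV x Jx[OF that]] br_antisym[OF qV br_closed[OF pV x]] by simp
  qed
  have X: "br a x \<in> V" "br b x \<in> V" "br c x \<in> V" using aV bV cV x br_closed by auto
  have "br (jacobiator a b c) x = br (br a (br b c)) x + br (br b (br c a)) x + br (br c (br a b)) x"
    unfolding jacobiator_def using aV bV cV x by (simp add: br_distrib_left br_closed add_closed)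
  also have "\<dots> = (br a (br b (br c x)) + br a (br (br b x) c) + br (br a x) (br b c))
     + (br b (br c (br a x)) + br b (br (br c x) a) + br (br b x) (br c a))
     + (br c (br a (br b x)) + br c (br (br a x) b) + br (br c x) (br a b))"
    using der[OF a P_br[OF b c]] der[OF b P_br[OF c a]] der[OF c P_br[OF a b]] der[OF b c] der[OF c a]
      der[OF a b] aV bV cV X by (simp add: br_distrib_right br_closed)
  also have "\<dots> = jacobiator a b (br c x) + jacobiator a (br b x) c + jacobiator (br a x) b c"
    unfolding jacobiator_def by (simp add: add_ac)
  finally show ?thesis .
qed

end


section \<open>The bracket defined by an action\<close>

lemma scaleU_Pair: "scaleU c (A, u) = (\<lambda>w b. c * A w b, \<lambda>w. c * u w)"
  by (simp add: scaleU_def)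

lemma scaleU_add: "scaleU c (x + y) = scaleU c x + scaleU c y"
  by (simp add: scaleU_def fun_eq_iff algebra_simps)

lemma scaleU_diff: "scaleU c (x - y) = scaleU c x - scaleU c y"
  by (simp add: scaleU_def fun_eq_iff algebra_simps)

lemma scaleU_zero: "scaleU c 0 = 0"
  by (simp add: scaleU_def fun_eq_iff zero_prod_def)

lemma Ucar_iff: "(A, u) \<in> Ucar B \<longleftrightarrow> is_op B A \<and> u \<in> lie_poly B"
  by (simp add: Ucar_def)

locale action_bracket =
  fixes Bs :: "'b set" and act :: "('b,'k::comm_ring_1) opr \<Rightarrow> ('b,'k) tens \<Rightarrow> ('b,'k) elt"
  assumes is_action_act: "is_action Bs act"
begin

abbreviation V :: "('b,'k) elt set" where "V \<equiv> Ucar Bs"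

abbreviation br :: "('b,'k) elt \<Rightarrow> ('b,'k) elt \<Rightarrow> ('b,'k) elt" where "br \<equiv> brU_with act"

lemma act_in_Ucar: "is_op Bs A \<Longrightarrow> u \<in> lie_poly Bs \<Longrightarrow> act A u \<in> V"
  using is_action_act by (simp add: is_action_def)

lemma act_add_op: "is_op Bs A \<Longrightarrow> is_op Bs A' \<Longrightarrow> u \<in> lie_poly Bs \<Longrightarrow> act (A + A') u = act A u + act A' u"
  using is_action_act by (simp add: is_action_def)

lemma act_add_lie: "is_op Bs A \<Longrightarrow> u \<in> lie_poly Bs \<Longrightarrow> u' \<in> lie_poly Bs \<Longrightarrow> act A (u + u') = act A u + act A u'"
  using is_action_act by (simp add: is_action_def)

lemma act_scale_op: "is_op Bs A \<Longrightarrow> u \<in> lie_poly Bs \<Longrightarrow> act (\<lambda>w b. c * A w b) u = scaleU c (act A u)"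
  using is_action_act by (simp add: is_action_def)

lemma act_scale_lie: "is_op Bs A \<Longrightarrow> u \<in> lie_poly Bs \<Longrightarrow> act A (\<lambda>w. c * u w) = scaleU c (act A u)"
  using is_action_act by (simp add: is_action_def)

lemma act_vec_to_tens: "is_op Bs A \<Longrightarrow> is_vec Bs x \<Longrightarrow> act A (vec_to_tens x) = to_U (apply_vec A x)"
  using is_action_act by (simp add: is_action_def)

lemma act_tbr: "is_op Bs A \<Longrightarrow> v \<in> lie_poly Bs \<Longrightarrow> w \<in> lie_poly Bs \<Longrightarrow>
    act A (tbr v w) = br (act A v) (0, w) - br (act A w) (0, v)"
  using is_action_act unfolding is_action_def by blast

lemma act_zero_op: "u \<in> lie_poly Bs \<Longrightarrow> act 0 u = 0"
  using act_add_op[OF is_op_zero is_op_zero, of u] by simp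

lemma act_zero_lie: "is_op Bs A \<Longrightarrow> act A 0 = 0"
  using act_add_lie[OF _ lie_poly_zero lie_poly_zero, of A] by simp

lemma br_Pair: "br (A, u) (A', u') = (br_ops A A', 0) + act A u' - act A' u + (0, tbr u u')"
  by (simp add: brU_with_def)

lemma V_zero: "0 \<in> V"
  by (simp add: zero_prod_def Ucar_iff is_op_zero lie_poly_zero)

lemma V_add: "x \<in> V \<Longrightarrow> y \<in> V \<Longrightarrow> x + y \<in> V"
  by (cases x; cases y) (simp add: Ucar_iff is_op_add lie_poly.add)

lemma V_uminus: "x \<in> V \<Longrightarrow> - x \<in> V"
  by (cases x) (simp add: Ucar_iff is_op_uminus lie_poly_uminus)

lemma V_diff: "x \<in> V \<Longrightarrow> y \<in> V \<Longrightarrow> x - y \<in> V"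
  using V_add[OF _ V_uminus, of x y] by simp

lemma V_scale: "x \<in> V \<Longrightarrow> scaleU c x \<in> V"
  by (cases x) (simp add: Ucar_iff scaleU_Pair is_op_scale lie_poly.smult)

lemma V_br: "x \<in> V \<Longrightarrow> y \<in> V \<Longrightarrow> br x y \<in> V"
proof (cases x; cases y)
  fix A u A' u' assume "x \<in> V" "y \<in> V" and xy: "x = (A, u)" "y = (A', u')"
  then have h: "is_op Bs A" "u \<in> lie_poly Bs" "is_op Bs A'" "u' \<in> lie_poly Bs" by (auto simp: Ucar_iff)
  have "(br_ops A A', 0) \<in> V" using h by (simp add: Ucar_iff is_op_br_ops lie_poly_zero)
  moreover have "(0, tbr u u') \<in> V" using h by (simp add: Ucar_iff is_op_zero lie_poly.brk)
  ultimately show "br x y \<in> V"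
    unfolding xy br_Pair by (intro V_add V_diff act_in_Ucar h)
qed

lemma br_add_left:
  assumes "x \<in> V" "y \<in> V" "z \<in> V"
  shows "br (x + y) z = br x z + br y z"
proof -
  obtain A1 u1 A2 u2 C c where xyz: "x = (A1, u1)" "y = (A2, u2)" "z = (C, c)"
    by (cases x, cases y, cases z) auto
  then have h: "is_op Bs A1" "u1 \<in> lie_poly Bs" "is_op Bs A2" "u2 \<in> lie_poly Bs" "is_op Bs C" "c \<in> lie_poly Bs"
    using assms by (auto simp: Ucar_iff)
  have "br_ops (A1 + A2) C = br_ops A1 C + br_ops A2 C"
    using br_ops_lincomb_left[of A1 A2 1 1 C] h by (simp add: is_op_finite_supp_vals plus_fun_def)
  then show ?thesis
    unfolding xyz add_Pair br_Pair
    by (simp add: act_add_op[OF h(1,3,6)] act_add_lie[OF h(5,2,4)] tbr_add_left prod_eq_iff algebra_simps)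
qed

lemma br_add_right:
  assumes "x \<in> V" "y \<in> V" "z \<in> V"
  shows "br z (x + y) = br z x + br z y"
proof -
  obtain A1 u1 A2 u2 C c where xyz: "x = (A1, u1)" "y = (A2, u2)" "z = (C, c)"
    by (cases x, cases y, cases z) auto
  then have h: "is_op Bs A1" "u1 \<in> lie_poly Bs" "is_op Bs A2" "u2 \<in> lie_poly Bs" "is_op Bs C" "c \<in> lie_poly Bs"
    using assms by (auto simp: Ucar_iff)
  have "br_ops C (A1 + A2) = br_ops C A1 + br_ops C A2"
    using br_ops_lincomb_right[of A1 A2 C 1 1] h by (simp add: is_op_finite_supp_vals plus_fun_def)
  then show ?thesis
    unfolding xyz add_Pair br_Pair
    by (simp add: act_add_op[OF h(1,3,6)] act_add_lie[OF h(5,2,4)] tbr_add_right prod_eq_iff algebra_simps)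
qed

lemma br_self: "x \<in> V \<Longrightarrow> br x x = 0"
  by (cases x) (simp add: br_Pair br_ops_self tbr_self zero_prod_def)

sublocale alt_bracket V br
  by unfold_locales (auto intro: V_zero V_add V_uminus V_br br_add_left br_add_right br_self)

lemma br_scale_left:
  assumes "x \<in> V" "z \<in> V"
  shows "br (scaleU k x) z = scaleU k (br x z)"
proof -
  obtain A u C c where xz: "x = (A, u)" "z = (C, c)" by (cases x, cases z) auto
  then have h: "is_op Bs A" "u \<in> lie_poly Bs" "is_op Bs C" "c \<in> lie_poly Bs"
    using assms by (auto simp: Ucar_iff)
  have "br_ops (\<lambda>w c. k * A w c) C = (\<lambda>w c. k * br_ops A C w c)"
    using br_ops_lincomb_left[of A A k 0 C] h by (simp add: is_op_finite_supp_vals)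
  then show ?thesis
    unfolding xz scaleU_Pair br_Pair
    by (simp add: act_scale_op[OF h(1,4)] act_scale_lie[OF h(3,2)] tbr_scale_left scaleU_add scaleU_diff
        scaleU_Pair zero_fun_def)
qed

lemma br_scale_right:
  assumes "x \<in> V" "z \<in> V"
  shows "br z (scaleU k x) = scaleU k (br z x)"
proof -
  obtain A u C c where xz: "x = (A, u)" "z = (C, c)" by (cases x, cases z) auto
  then have h: "is_op Bs A" "u \<in> lie_poly Bs" "is_op Bs C" "c \<in> lie_poly Bs"
    using assms by (auto simp: Ucar_iff)
  have "br_ops C (\<lambda>w c. k * A w c) = (\<lambda>w c. k * br_ops C A w c)"
    using br_ops_lincomb_right[of A A C k 0] h by (simp add: is_op_finite_supp_vals)
  then show ?thesis
    unfolding xz scaleU_Pair br_Pair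
    by (simp add: act_scale_op[OF h(1,4)] act_scale_lie[OF h(3,2)] tbr_scale_right scaleU_add scaleU_diff
        scaleU_Pair zero_fun_def)
qed

lemma jacobiator_scale3: "x \<in> V \<Longrightarrow> y \<in> V \<Longrightarrow> z \<in> V \<Longrightarrow> jacobiator x y (scaleU k z) = scaleU k (jacobiator x y z)"
  by (simp add: jacobiator_def br_scale_left br_scale_right V_br V_scale scaleU_add)


section \<open>The Jacobi identity\<close>

definition Vop :: "('b,'k) elt set" where "Vop = {(A, 0) | A. is_op Bs A}"

definition Vlie :: "('b,'k) elt set" where "Vlie = {(0, u) | u. u \<in> lie_poly Bs}"

lemma Vop_subset: "Vop \<subseteq> V"
  by (auto simp: Vop_def Ucar_iff lie_poly_zero)

lemma Vlie_subset: "Vlie \<subseteq> V"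
  by (auto simp: Vlie_def Ucar_iff is_op_zero)

lemma V_decompose: "x \<in> V \<Longrightarrow> \<exists>p\<in>Vop. \<exists>l\<in>Vlie. x = p + l"
  by (cases x) (auto simp: Vop_def Vlie_def Ucar_iff)

lemma br_op_op: "is_op Bs A \<Longrightarrow> is_op Bs B \<Longrightarrow> br (A, 0) (B, 0) = (br_ops A B, 0)"
  by (simp add: br_Pair tbr_zero act_zero_lie zero_prod_def)

lemma br_op_lie: "is_op Bs A \<Longrightarrow> br (A, 0) (0, u) = act A u"
  using act_zero_lie[OF is_op_zero] by (simp add: br_Pair br_ops_zero_right tbr_zero zero_prod_def)

lemma br_lie_lie: "u \<in> lie_poly Bs \<Longrightarrow> v \<in> lie_poly Bs \<Longrightarrow> br (0, u) (0, v) = (0, tbr u v)"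
  by (simp add: br_Pair act_zero_op br_ops_self)

lemma Vop_br: "a \<in> Vop \<Longrightarrow> b \<in> Vop \<Longrightarrow> br a b \<in> Vop"
  by (auto simp: Vop_def br_op_op is_op_br_ops)

lemma Vop_add: "a \<in> Vop \<Longrightarrow> b \<in> Vop \<Longrightarrow> a + b \<in> Vop"
  by (auto simp: Vop_def is_op_add)

lemma jacobi_lie_lie_lie: "a \<in> Vlie \<Longrightarrow> b \<in> Vlie \<Longrightarrow> c \<in> Vlie \<Longrightarrow> jacobiator a b c = 0"
  by (auto simp: Vlie_def jacobiator_def br_lie_lie lie_poly.brk tbr_jacobi zero_prod_def)

text \<open>This case is the defining recursion of the action.\<close>

lemma jacobi_op_lie_lie: "a \<in> Vop \<Longrightarrow> b \<in> Vlie \<Longrightarrow> c \<in> Vlie \<Longrightarrow> jacobiator a b c = 0"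
proof -
  assume "a \<in> Vop" "b \<in> Vlie" "c \<in> Vlie"
  then obtain A v w where A: "is_op Bs A" and v: "v \<in> lie_poly Bs" and w: "w \<in> lie_poly Bs"
    and abc: "a = (A, 0)" "b = (0, v)" "c = (0, w)" by (auto simp: Vop_def Vlie_def)
  have aV: "a \<in> V" and bV: "b \<in> V" and cV: "c \<in> V"
    using abc A v w by (auto simp: Ucar_iff lie_poly_zero is_op_zero)
  have av: "act A v \<in> V" and aw: "act A w \<in> V" using act_in_Ucar A v w by auto
  have "jacobiator a b c = br a (br b c) + br b (br c a) + br c (br a b)" by (simp add: jacobiator_def)
  also have "br c a = - act A w" using br_antisym[OF cV aV] abc br_op_lie[OF A] by simp
  also have "br b (- act A w) = br (act A w) b" using br_uminus_right[OF aw bV] br_antisym[OF bV aw] by simp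
  also have "br c (br a b) = - br (act A v) c" using br_antisym[OF cV av] abc br_op_lie[OF A] by simp
  also have "br a (br b c) = act A (tbr v w)" using abc br_op_lie[OF A] br_lie_lie[OF v w] by simp
  finally show ?thesis using act_tbr[OF A v w] abc by simp
qed

lemma br_op_vec: "is_op Bs A \<Longrightarrow> is_vec Bs y \<Longrightarrow> br (A, 0) (0, vec_to_tens y) = to_U (apply_vec A y)"
  by (simp add: br_op_lie act_vec_to_tens)

lemma br_op_to_U:
  assumes "is_op Bs A" "is_op Bs (strip M)" "is_vec Bs (M [])"
  shows "br (A, 0) (to_U M) = (br_ops A (strip M), 0) + to_U (apply_vec A (M []))"
  using assms by (simp add: to_U_def br_Pair act_vec_to_tens act_zero_lie tbr_zero zero_prod_def)

text \<open>On \<open>U\<^sub>1\<close> the identity is the derivation rule \<open>[A, B](x) = [A, B(x)] - [B, A(x)]\<close>.\<close>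

lemma jacobi_op_op_vec:
  assumes A: "is_op Bs A" and B: "is_op Bs B" and y: "is_vec Bs y"
  shows "jacobiator (A, 0) (B, 0) (0, vec_to_tens y) = 0"
proof -
  let ?x = "(0, vec_to_tens y) :: ('b,'k) elt"
  have xV: "?x \<in> V" using y by (simp add: Ucar_iff is_op_zero lie_poly.gen)
  have AV: "(A, 0) \<in> V" and BV: "(B, 0) \<in> V" using A B by (auto simp: Ucar_iff lie_poly_zero)
  have "br (A, 0) (br (B, 0) ?x) = (br_ops A (strip (apply_vec B y)), 0) + to_U (apply_vec A (apply_vec B y []))"
    using br_op_to_U[OF A is_op_strip_apply_vec[OF B y] is_vec_apply_vec[OF is_op_is_vec[OF B] y]]
    by (simp add: br_op_vec[OF B y])
  moreover have "br (B, 0) (br (A, 0) ?x) = (br_ops B (strip (apply_vec A y)), 0) + to_U (apply_vec B (apply_vec A y []))"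
    using br_op_to_U[OF B is_op_strip_apply_vec[OF A y] is_vec_apply_vec[OF is_op_is_vec[OF A] y]]
    by (simp add: br_op_vec[OF A y])
  moreover have "br (br (A, 0) (B, 0)) ?x = to_U (apply_vec (br_ops A B) y)"
    using A B y by (simp add: br_op_op br_op_lie act_vec_to_tens is_op_br_ops)
  ultimately show ?thesis
    using jacobiator_eq[OF AV BV xV] to_U_apply_vec_br_ops[OF A B y] by simp
qed

lemma jacobi_op_op_lie_poly:
  assumes "u \<in> lie_poly Bs" "is_op Bs A" "is_op Bs B"
  shows "jacobiator (A, 0) (B, 0) (0, u) = 0"
  using assms
proof (induction arbitrary: A B rule: lie_poly.induct)
  case (gen x)
  then show ?case by (intro jacobi_op_op_vec)
next
  case (add u v)
  have V: "(A, 0) \<in> V" "(B, 0) \<in> V" "(0, u) \<in> V" "(0, v) \<in> V"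
    using add by (auto simp: Ucar_iff lie_poly_zero is_op_zero)
  have "jacobiator (A, 0) (B, 0) (0, u + v) = 0"
    using jacobiator_add3[OF V] add.IH add.prems by simp
  then show ?case by (simp only: plus_fun_def)
next
  case (smult u c)
  have V: "(A, 0) \<in> V" "(B, 0) \<in> V" "(0, u) \<in> V"
    using smult by (auto simp: Ucar_iff lie_poly_zero is_op_zero)
  have "jacobiator (A, 0) (B, 0) (0, u) = 0"
    using smult.IH[OF smult.prems] by (simp add: zero_fun_def)
  moreover have "(0, \<lambda>w. c * u w) = scaleU c (0, u)" by (simp add: scaleU_Pair zero_fun_def)
  ultimately have "jacobiator (A, 0) (B, 0) (0, \<lambda>w. c * u w) = 0"
    using jacobiator_scale3[OF V, of c] by (simp add: scaleU_zero)
  then show ?case by (simp only: zero_fun_def)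
next
  case (brk u v)
  have A: "(A, 0) \<in> Vop" and B: "(B, 0) \<in> Vop" using brk.prems by (auto simp: Vop_def)
  have u: "(0, u) \<in> Vlie" and v: "(0, v) \<in> Vlie" using brk.hyps by (auto simp: Vlie_def)
  have "jacobiator a b (0, u) = 0" "jacobiator a b (0, v) = 0" if "a \<in> Vop" "b \<in> Vop" for a b
    using that brk.IH by (auto simp: Vop_def zero_fun_def)
  then have "jacobiator (A, 0) (B, 0) (br (0, u) (0, v)) = 0"
    by (intro jacobiator_br_vanishes[OF Vop_subset Vlie_subset V_decompose Vop_br jacobi_op_lie_lie A B u v])
  then have "jacobiator (A, 0) (B, 0) (0, tbr u v) = 0" using br_lie_lie[OF brk.hyps] by simp
  then show ?case by (simp only: zero_fun_def)
qed

lemma jacobi_op_op_lie: "a \<in> Vop \<Longrightarrow> b \<in> Vop \<Longrightarrow> c \<in> Vlie \<Longrightarrow> jacobiator a b c = 0"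
  by (auto simp: Vop_def Vlie_def jacobi_op_op_lie_poly)

lemma op_eq_zero_if_act_vec_zero:
  assumes K: "is_op Bs K" and kill: "\<And>y. is_vec Bs y \<Longrightarrow> act K (vec_to_tens y) = 0"
  shows "K = 0"
proof (rule ext)
  fix w show "K w = 0 w"
  proof (cases w)
    case Nil then show ?thesis using is_op_Nil[OF K] by simp
  next
    case (Cons b w')
    show ?thesis
    proof (cases "b \<in> Bs")
      case True
      let ?y = "\<lambda>c. if c = b then 1 else 0"
      have "is_vec Bs ?y" using True by (auto simp: is_vec_def)
      then have "apply_vec K ?y = 0" using kill act_vec_to_tens[OF K] to_U_eq_zero by metis
      then show ?thesis using Cons apply_vec_indicator[of K b w'] by simp
    next
      case False
      then show ?thesis using is_op_outside[OF K, of w] Cons by auto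
    qed
  qed
qed

lemma jacobi_op_op_split:
  assumes "a \<in> Vop" "b \<in> Vop" "p \<in> Vop" "l \<in> Vlie"
  shows "jacobiator a b (p + l) = jacobiator a b p"
proof -
  have "a \<in> V" "b \<in> V" "p \<in> V" "l \<in> V" using assms Vop_subset Vlie_subset by auto
  then show ?thesis using jacobiator_add3 jacobi_op_op_lie[OF assms(1,2,4)] by simp
qed

lemma br_op_vec_split:
  assumes "is_op Bs A" "is_vec Bs y"
  obtains p l where "p \<in> Vop" "l \<in> Vlie" "br (A, 0) (0, vec_to_tens y) = p + l"
    and "p = (strip (apply_vec A y), 0)"
proof
  show "(strip (apply_vec A y), 0) \<in> Vop"
    using is_op_strip_apply_vec[OF assms] by (simp add: Vop_def)
  show "(0, vec_to_tens (apply_vec A y [])) \<in> Vlie"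
    using is_vec_apply_vec[OF is_op_is_vec[OF assms(1)] assms(2)] by (auto simp: Vlie_def intro: lie_poly.gen)
  show "br (A, 0) (0, vec_to_tens y) = (strip (apply_vec A y), 0) + (0, vec_to_tens (apply_vec A y []))"
    using assms by (simp add: br_op_vec to_U_def)
qed simp

text \<open>Bracketing the Jacobiator of three operators with \<open>x \<in> U\<^sub>1\<close> distributes \<open>x\<close> over the three
  arguments, each of which drops in order.\<close>

lemma br_jacobiator_op_vec:
  assumes A: "is_op Bs A" and B: "is_op Bs B" and C: "is_op Bs C" and y: "is_vec Bs y"
    and "jacobiator (A, 0) (B, 0) (strip (apply_vec C y), 0) = 0"
    and "jacobiator (A, 0) (strip (apply_vec B y), 0) (C, 0) = 0"
    and "jacobiator (strip (apply_vec A y), 0) (B, 0) (C, 0) = 0"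
  shows "br (jacobiator (A, 0) (B, 0) (C, 0)) (0, vec_to_tens y) = 0"
proof -
  let ?x = "(0, vec_to_tens y) :: ('b,'k) elt"
  have xL: "?x \<in> Vlie" using y by (auto simp: Vlie_def intro: lie_poly.gen)
  have ABC: "(A, 0) \<in> Vop" "(B, 0) \<in> Vop" "(C, 0) \<in> Vop" using A B C by (auto simp: Vop_def)
  obtain pA lA where a: "pA \<in> Vop" "lA \<in> Vlie" "br (A, 0) ?x = pA + lA" "pA = (strip (apply_vec A y), 0)"
    using br_op_vec_split[OF A y] .
  obtain pB lB where b: "pB \<in> Vop" "lB \<in> Vlie" "br (B, 0) ?x = pB + lB" "pB = (strip (apply_vec B y), 0)"
    using br_op_vec_split[OF B y] .
  obtain pC lC where c: "pC \<in> Vop" "lC \<in> Vlie" "br (C, 0) ?x = pC + lC" "pC = (strip (apply_vec C y), 0)"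
    using br_op_vec_split[OF C y] .
  have "br (jacobiator (A, 0) (B, 0) (C, 0)) ?x = jacobiator (A, 0) (B, 0) (br (C, 0) ?x)
      + jacobiator (A, 0) (br (B, 0) ?x) (C, 0) + jacobiator (br (A, 0) ?x) (B, 0) (C, 0)"
    using xL Vlie_subset jacobi_op_op_lie ABC by (intro br_jacobiator[OF Vop_subset Vop_br]) auto
  moreover have "jacobiator (A, 0) (B, 0) (br (C, 0) ?x) = 0"
    using jacobi_op_op_split[OF ABC(1,2) c(1,2)] c(3,4) assms(5) by simp
  moreover have "jacobiator (A, 0) (br (B, 0) ?x) (C, 0) = 0"
    using jacobi_op_op_split[OF ABC(3,1) b(1,2)] b(3,4) assms(6)
      jacobiator_cycle[of "(A, 0)" _ "(C, 0)"] jacobiator_cycle[of _ "(C, 0)" "(A, 0)"] by simp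
  moreover have "jacobiator (br (A, 0) ?x) (B, 0) (C, 0) = 0"
    using jacobi_op_op_split[OF ABC(2,3) a(1,2)] a(3,4) assms(7)
      jacobiator_cycle[of _ "(B, 0)" "(C, 0)"] jacobiator_cycle[of "(B, 0)" "(C, 0)"] by simp
  ultimately show ?thesis by simp
qed

lemma jacobi_op_op_op_zero:
  assumes "is_op Bs A" "is_op Bs B" "is_op Bs C" "A = 0 \<or> B = 0 \<or> C = 0"
  shows "jacobiator (A, 0) (B, 0) (C, 0) = 0"
  using assms by (intro jacobiator_zero_any) (auto simp: Ucar_iff lie_poly_zero zero_prod_def)

lemma jacobi_op_op_op_step:
  assumes A: "is_op Bs A" and B: "is_op Bs B" and C: "is_op Bs C"
    and lower: "\<And>y. is_vec Bs y \<Longrightarrow> jacobiator (A, 0) (B, 0) (strip (apply_vec C y), 0) = 0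
      \<and> jacobiator (A, 0) (strip (apply_vec B y), 0) (C, 0) = 0
      \<and> jacobiator (strip (apply_vec A y), 0) (B, 0) (C, 0) = 0"
  shows "jacobiator (A, 0) (B, 0) (C, 0) = 0"
proof -
  let ?J = "jacobiator (A, 0) (B, 0) (C, 0)"
  have "?J \<in> Vop" unfolding jacobiator_def using A B C by (intro Vop_add Vop_br) (auto simp: Vop_def)
  then obtain K where K: "?J = (K, 0)" "is_op Bs K" by (auto simp: Vop_def)
  have "act K (vec_to_tens y) = 0" if y: "is_vec Bs y" for y
    using br_jacobiator_op_vec[OF A B C y] lower[OF y] K br_op_lie by simp
  then have "K = 0" using K op_eq_zero_if_act_vec_zero by (simp add: zero_prod_def)
  then show ?thesis using K by (simp add: zero_prod_def)
qed

lemma jacobi_op_op_op_order: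
  assumes "na + nb + nc \<le> n" "is_op Bs A" "is_op Bs B" "is_op Bs C"
    and "order_le A na" "order_le B nb" "order_le C nc"
  shows "jacobiator (A, 0) (B, 0) (C, 0) = 0"
  using assms
proof (induction n arbitrary: A B C na nb nc)
  case 0
  then have "jacobiator (A, 0) (B, 0) (C, 0) = 0"
    using order_le_0_eq_zero by (intro jacobi_op_op_op_zero) auto
  then show ?case by (simp add: zero_fun_def zero_prod_def)
next
  case (Suc n)
  have A: "is_op Bs A" and B: "is_op Bs B" and C: "is_op Bs C"
    and oA: "order_le A na" and oB: "order_le B nb" and oC: "order_le C nc"
    and n: "na + nb + nc \<le> Suc n" using Suc.prems by auto
  have "jacobiator (A, 0) (B, 0) (C, 0) = 0"
  proof (cases "na = 0 \<or> nb = 0 \<or> nc = 0")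
    case True
    then show ?thesis using A B C oA oB oC order_le_0_eq_zero by (intro jacobi_op_op_op_zero) auto
  next
    case False
    show ?thesis
    proof (rule jacobi_op_op_op_step[OF A B C], intro conjI)
      fix y :: "'b \<Rightarrow> 'k" assume y: "is_vec Bs y"
      show "jacobiator (A, 0) (B, 0) (strip (apply_vec C y), 0) = 0"
        using n False by (intro Suc.IH[OF _ A B is_op_strip_apply_vec[OF C y] oA oB
            order_le_strip_apply_vec[OF oC]]) simp
      show "jacobiator (A, 0) (strip (apply_vec B y), 0) (C, 0) = 0"
        using n False by (intro Suc.IH[OF _ A is_op_strip_apply_vec[OF B y] C oA
            order_le_strip_apply_vec[OF oB] oC]) simp
      show "jacobiator (strip (apply_vec A y), 0) (B, 0) (C, 0) = 0"
        using n False by (intro Suc.IH[OF _ is_op_strip_apply_vec[OF A y] B C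
            order_le_strip_apply_vec[OF oA] oB oC]) simp
    qed
  qed
  then show ?case by (simp add: zero_fun_def zero_prod_def)
qed

lemma jacobi_op_op_op: "a \<in> Vop \<Longrightarrow> b \<in> Vop \<Longrightarrow> c \<in> Vop \<Longrightarrow> jacobiator a b c = 0"
proof -
  assume "a \<in> Vop" "b \<in> Vop" "c \<in> Vop"
  then obtain A B C where abc: "a = (A, 0)" "b = (B, 0)" "c = (C, 0)"
    and ops: "is_op Bs A" "is_op Bs B" "is_op Bs C" by (auto simp: Vop_def)
  then obtain na nb nc where "order_le A na" "order_le B nb" "order_le C nc"
    using is_op_order_le by metis
  then show ?thesis using jacobi_op_op_op_order[OF order_refl ops] abc by simp
qed

lemma jacobi: "x \<in> V \<Longrightarrow> y \<in> V \<Longrightarrow> z \<in> V \<Longrightarrow> jacobiator x y z = 0"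
  by (rule jacobi_by_decomposition[OF Vop_subset Vlie_subset V_decompose jacobi_op_op_op
        jacobi_op_op_lie jacobi_op_lie_lie jacobi_lie_lie_lie])

end

theorem proposition2p3:
  fixes B :: "'b set"
  shows "lie_algebra_on (Ucar B :: ('b, 'k::field_char_0) elt set) scaleU (brU B)"
proof -
  interpret action_bracket B "actU B :: ('b,'k) opr \<Rightarrow> ('b,'k) tens \<Rightarrow> ('b,'k) elt"
    by unfold_locales (rule actU_is_action)
  show ?thesis
    unfolding lie_algebra_on_def brU_def
    using V_zero V_add V_scale V_br br_add_left br_add_right br_scale_left br_scale_right br_self jacobi
    by (auto simp: jacobiator_def)
qed

end
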